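(* Let $D$ be a reduced knot diagram with $n$ vertices and let $2\le k\le\infty$. Fix a version of the $k$-color region select game on $D$ and a checkerboard shading of $D$ whose unshaded regions admit an alternating signing; fix such a signing. Then the following hold. (1) For any shaded region $r$ and any unshaded region $r'$, every color configuration has a unique solving pattern in which $r$ and $r'$ are not pushed. (2) If $k$ is odd, then for any two unshaded regions of opposite signs, every color configuration has a unique solving pattern in which these two regions are not pushed. (3) Let $k<\infty$, let $S$ be a set of $i$ regions, and let $q$ be the number of color configurations having a solving pattern that does not push any region of $S$. - If $S$ contains at least one shaded and at least one unshaded region, then $q=k^{n+2-i}$. - If $i\ge1$ and $S$ consists only of shaded regions, or only of unshaded regions all of the same sign, then $q=k^{n+1-i}$. - If $S$ consists only of unshaded regions, not all of the same sign, then $q=k^{n+2-i}$ when $k$ is odd and $q=k^{n+2-i}/2$ when $k$ is even.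
   Context: Diagrams: a link (knot) diagram $D$ is the underlying graph of a regular projection of a link (knot) into $S^2$. Its vertices are the crossings, each of valence 4, and over/under information is ignored. Components without crossings are closed loops, each regarded as one edge with no vertices. Regions of $D$ are the connected components of $S^2\setminus D$. A vertex or edge is incident to a region if it lies in the boundary of that region. Two regions are adjacent if they are incident to a common edge. A vertex $v$ is reducible if some circle in $S^2$ meets $D$ transversely only at $v$, and irreducible otherwise. An irreducible vertex is incident to four distinct regions. A reducible vertex $v$ is incident to exactly three regions $r_0,r_1,r_2$, where $r_0$ touches $v$ from two sides and $r_1,r_2$ touch it from one side. A knot diagram with $n$ vertices has $n+2$ regions. A knot diagram is reduced if all its vertices are irreducible. Ring: for an integer $k\ge2$ let $\mathbb{Z}_k=\mathbb{Z}/k\mathbb{Z}$, and for $k=\infty$ let $\mathbb{Z}_\infty=\mathbb{Z}$. Game versions: a version of the $k$-color region select game on $D$ is a choice of an increment number $a(v,r)\in\mathbb{Z}_k$ for every incident vertex–region pair, subject to the following rules. - If $k<\infty$ and $v$ is irreducible, then $a(v,r)=a_v$ is the same for all regions $r$ incident to $v$, and $a_v$ is not a zero divisor of $\mathbb{Z}_k$. - If $k<\infty$ and $v$ is reducible, then $a(v,r_0)$ is arbitrary, while $a(v,r_1)$ and $a(v,r_2)$ are not zero divisors. - If $k=\infty$, then $a(v,r)=1$, except that $a(v,r_0)\in\mathbb{Z}$ is arbitrary when $v$ is reducible. - The original game is the version in which all increment numbers equal $1$. Game matrix: enumerate the vertices as $v_1,\dots,v_n$ and the regions as $r_1,\dots,r_m$.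 The game matrix is the $n\times m$ matrix $M$ over $\mathbb{Z}_k$ with $M_{ij}=a(v_i,r_j)$ if $v_i$ is incident to $r_j$, and $M_{ij}=0$ otherwise. Patterns and configurations: a push pattern is a vector $\mathbf p\in\mathbb{Z}_k^m$, and $\mathbf p(r_j)=p_j$ is the number of times $r_j$ is pushed. A region $r$ is not pushed in $\mathbf p$ if $\mathbf p(r)=0$. A color configuration is a vector $\mathbf c\in\mathbb{Z}_k^n$. Applying $\mathbf p$ to $\mathbf c$ yields $\mathbf c+M\mathbf p$. The configuration $\mathbf c$ is solvable if some $\mathbf p$ satisfies $M\mathbf p=-\mathbf c$; such a $\mathbf p$ is a solving pattern for $\mathbf c$. $D$ is always solvable in the version if every $\mathbf c\in\mathbb{Z}_k^n$ is solvable. A null pattern is an element of $Ker_k(M)=\{\mathbf p\in\mathbb{Z}_k^m: M\mathbf p=0\}$. Checkerboard shading: a checkerboard shading of $D$ is a shading of some of its regions such that, of any two adjacent regions, exactly one is shaded. Alternating signing: an alternating signing of the unshaded regions is an assignment of a sign $+$ or $-$ to each unshaded region such that every vertex is incident to two unshaded regions carrying opposite signs. *)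

theory Defs
  imports "HOL-Combinatorics.Permutations"
begin

text \<open>Knot diagrams are encoded as combinatorial maps (rotation systems) on a finite
set H of darts (half-edges): sigma is the rotation of darts around each crossing
(orbits of size 4 = vertices), alpha is the fixed-point-free involution pairing the
two darts of an edge, and the orbits of sigma o alpha are the regions (faces).
Genus 0 (the sphere) is expressed by Euler's formula V - E + F = 2, and the diagram
being a knot (one component) by the straight-ahead permutation having exactly two
orbits (the single component traversed in both directions).\<close>

definition orb :: "('d \<Rightarrow> 'd) \<Rightarrow> 'd \<Rightarrow> 'd set" where
  "orb f h = range (\<lambda>n. (f ^^ n) h)"

definition verts :: "'d set \<Rightarrow> ('d \<Rightarrow> 'd) \<Rightarrow> 'd set set" where
  "verts H \<sigma> = orb \<sigma> ` H"

definition edges :: "'d set \<Rightarrow> ('d \<Rightarrow> 'd) \<Rightarrow> 'd set set" where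
  "edges H \<alpha> = orb \<alpha> ` H"

definition regions :: "'d set \<Rightarrow> ('d \<Rightarrow> 'd) \<Rightarrow> ('d \<Rightarrow> 'd) \<Rightarrow> 'd set set" where
  "regions H \<sigma> \<alpha> = orb (\<sigma> \<circ> \<alpha>) ` H"

definition straight_orbits :: "'d set \<Rightarrow> ('d \<Rightarrow> 'd) \<Rightarrow> ('d \<Rightarrow> 'd) \<Rightarrow> 'd set set" where
  "straight_orbits H \<sigma> \<alpha> = orb (\<lambda>h. \<sigma> (\<sigma> (\<alpha> h))) ` H"

definition map_connected :: "'d set \<Rightarrow> ('d \<Rightarrow> 'd) \<Rightarrow> ('d \<Rightarrow> 'd) \<Rightarrow> bool" where
  "map_connected H \<sigma> \<alpha> \<longleftrightarrow>
     (\<forall>h\<in>H. \<forall>h'\<in>H. (h, h') \<in> {(x, y). x \<in> H \<and> (y = \<sigma> x \<or> y = \<alpha> x)}\<^sup>*)"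

definition knot_diagram :: "'d set \<Rightarrow> ('d \<Rightarrow> 'd) \<Rightarrow> ('d \<Rightarrow> 'd) \<Rightarrow> bool" where
  "knot_diagram H \<sigma> \<alpha> \<longleftrightarrow>
     finite H \<and> \<sigma> permutes H \<and> \<alpha> permutes H \<and>
     (\<forall>h\<in>H. \<alpha> h \<noteq> h \<and> \<alpha> (\<alpha> h) = h) \<and>
     (\<forall>h\<in>H. card (orb \<sigma> h) = 4) \<and>
     map_connected H \<sigma> \<alpha> \<and>
     int (card (verts H \<sigma>)) - int (card (edges H \<alpha>)) + int (card (regions H \<sigma> \<alpha>)) = 2 \<and>
     card (straight_orbits H \<sigma> \<alpha>) = 2"

text \<open>A vertex v and a region r are incident iff some corner of v lies in r;
the number of corners of v in r is card (v \<inter> r).\<close>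
definition incident :: "'d set \<Rightarrow> 'd set \<Rightarrow> bool" where
  "incident v r \<longleftrightarrow> v \<inter> r \<noteq> {}"

definition adjacent :: "('d \<Rightarrow> 'd) \<Rightarrow> 'd set \<Rightarrow> 'd set \<Rightarrow> bool" where
  "adjacent \<alpha> r r' \<longleftrightarrow> (\<exists>h\<in>r. \<alpha> h \<in> r')"

definition irreducible_vertex :: "'d set \<Rightarrow> ('d \<Rightarrow> 'd) \<Rightarrow> ('d \<Rightarrow> 'd) \<Rightarrow> 'd set \<Rightarrow> bool" where
  "irreducible_vertex H \<sigma> \<alpha> v \<longleftrightarrow> card {r \<in> regions H \<sigma> \<alpha>. incident v r} = 4"

definition reduced :: "'d set \<Rightarrow> ('d \<Rightarrow> 'd) \<Rightarrow> ('d \<Rightarrow> 'd) \<Rightarrow> bool" where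
  "reduced H \<sigma> \<alpha> \<longleftrightarrow> (\<forall>v\<in>verts H \<sigma>. irreducible_vertex H \<sigma> \<alpha> v)"

text \<open>The ring Z_k is represented by int modulo k, with k = 0 encoding k = infinity
(x mod 0 = x).  Versions of the game: increment numbers a v r (only relevant for
incident pairs).  Regions touching v from one side (card (v \<inter> r) = 1) get a
non-zero-divisor (a unit) for finite k and 1 for k = infinity; at irreducible
vertices all increments coincide in Z_k; the doubly touching region r0 at a
reducible vertex is arbitrary.\<close>
definition game_version :: "'d set \<Rightarrow> ('d \<Rightarrow> 'd) \<Rightarrow> ('d \<Rightarrow> 'd) \<Rightarrow> nat \<Rightarrow> ('d set \<Rightarrow> 'd set \<Rightarrow> int) \<Rightarrow> bool" where
  "game_version H \<sigma> \<alpha> k a \<longleftrightarrow>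
     (\<forall>v\<in>verts H \<sigma>. \<forall>r\<in>regions H \<sigma> \<alpha>. incident v r \<longrightarrow>
        (card (v \<inter> r) = 1 \<longrightarrow> (if k = 0 then a v r = 1 else coprime (a v r) (int k))) \<and>
        (irreducible_vertex H \<sigma> \<alpha> v \<longrightarrow>
           (\<forall>r'\<in>regions H \<sigma> \<alpha>. incident v r' \<longrightarrow> a v r mod int k = a v r' mod int k)))"

text \<open>Elements of Z_k^A, by canonical representatives (0..k-1, or all of int when k = 0),
extended by 0 outside A.\<close>
definition vecs :: "nat \<Rightarrow> 'x set \<Rightarrow> ('x \<Rightarrow> int) set" where
  "vecs k A = {p. (\<forall>x\<in>A. k \<noteq> 0 \<longrightarrow> 0 \<le> p x \<and> p x < int k) \<and> (\<forall>x. x \<notin> A \<longrightarrow> p x = 0)}"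

definition game_mult :: "'d set \<Rightarrow> ('d \<Rightarrow> 'd) \<Rightarrow> ('d \<Rightarrow> 'd) \<Rightarrow> ('d set \<Rightarrow> 'd set \<Rightarrow> int)
    \<Rightarrow> ('d set \<Rightarrow> int) \<Rightarrow> 'd set \<Rightarrow> int" where
  "game_mult H \<sigma> \<alpha> a p v = (\<Sum>r\<in>regions H \<sigma> \<alpha>. if incident v r then a v r * p r else 0)"

definition solving :: "'d set \<Rightarrow> ('d \<Rightarrow> 'd) \<Rightarrow> ('d \<Rightarrow> 'd) \<Rightarrow> nat \<Rightarrow> ('d set \<Rightarrow> 'd set \<Rightarrow> int)
    \<Rightarrow> ('d set \<Rightarrow> int) \<Rightarrow> ('d set \<Rightarrow> int) \<Rightarrow> bool" where
  "solving H \<sigma> \<alpha> k a c p \<longleftrightarrow>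
     (\<forall>v\<in>verts H \<sigma>. (game_mult H \<sigma> \<alpha> a p v + c v) mod int k = 0)"

definition checkerboard :: "'d set \<Rightarrow> ('d \<Rightarrow> 'd) \<Rightarrow> ('d \<Rightarrow> 'd) \<Rightarrow> 'd set set \<Rightarrow> bool" where
  "checkerboard H \<sigma> \<alpha> sh \<longleftrightarrow> sh \<subseteq> regions H \<sigma> \<alpha> \<and>
     (\<forall>r\<in>regions H \<sigma> \<alpha>. \<forall>r'\<in>regions H \<sigma> \<alpha>. adjacent \<alpha> r r' \<longrightarrow> (r \<in> sh \<longleftrightarrow> r' \<notin> sh))"

text \<open>Signs: True = +, False = -.\<close>
definition alternating_signing :: "'d set \<Rightarrow> ('d \<Rightarrow> 'd) \<Rightarrow> ('d \<Rightarrow> 'd) \<Rightarrow> 'd set set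
    \<Rightarrow> ('d set \<Rightarrow> bool) \<Rightarrow> bool" where
  "alternating_signing H \<sigma> \<alpha> sh sg \<longleftrightarrow>
     (\<forall>v\<in>verts H \<sigma>. \<exists>r\<in>regions H \<sigma> \<alpha> - sh. \<exists>r'\<in>regions H \<sigma> \<alpha> - sh.
        incident v r \<and> incident v r' \<and> sg r \<noteq> sg r')"

definition num_solvable_avoiding :: "'d set \<Rightarrow> ('d \<Rightarrow> 'd) \<Rightarrow> ('d \<Rightarrow> 'd) \<Rightarrow> nat
    \<Rightarrow> ('d set \<Rightarrow> 'd set \<Rightarrow> int) \<Rightarrow> 'd set set \<Rightarrow> nat" where
  "num_solvable_avoiding H \<sigma> \<alpha> k a S =
     card {c \<in> vecs k (verts H \<sigma>). \<exists>p\<in>vecs k (regions H \<sigma> \<alpha>).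
             (\<forall>r\<in>S. p r = 0) \<and> solving H \<sigma> \<alpha> k a c p}"

end

theory Submission
  imports Defs "HOL-Combinatorics.Orbits" "Jordan_Normal_Form.Determinant"
begin

text \<open>At an irreducible crossing all four incident regions receive the same unit increment, so
  modulo that unit a pattern is null exactly when its values on the four regions around every
  crossing sum to zero.  Two such null patterns are the checkerboard pattern (\<open>+1\<close> on shaded,
  \<open>-1\<close> on unshaded regions) and the alternating signing.  Walking straight ahead through a
  crossing negates the sum of the two regions beside an edge; since the knot has one component
  and the diagram is connected, these two patterns span the kernel.  As there are \<open>n + 2\<close>
  regions and \<open>n\<close> crossings, the patterns vanishing on \<open>S\<close> map onto the \<open>q\<close> solvable
  configurations with fibres as large as the part of the kernel vanishing on \<open>S\<close>:
  \<open>q \<cdot> #{(u, t). u \<cdot> checkerboard + t \<cdot> signing vanishes on S} = k^(n+2-i)\<close>, and the number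
  of pairs is read off from the shades and signs in \<open>S\<close>.  Over \<open>\<int>\<close>, deleting the columns of a
  shaded and an unshaded region leaves a square matrix that is invertible modulo every \<open>m\<close>,
  hence unimodular.\<close>

lemma orb_eq_orbit: "permutation f \<Longrightarrow> orb f x = orbit f x"
  by (simp add: orb_def orbit_altdef_permutation full_SetCompr_eq)

lemma self_in_orb: "x \<in> orb f x"
  unfolding orb_def by (metis funpow_0 rangeI)

lemma funpow_in_orb: "(f ^^ n) x \<in> orb f x"
  unfolding orb_def by simp

lemma orb_subset:
  assumes "f permutes H" "x \<in> H"
  shows "orb f x \<subseteq> H"
proof
  fix y assume "y \<in> orb f x"
  then obtain n where y: "y = (f ^^ n) x" unfolding orb_def by auto
  have "(f ^^ n) x \<in> H" by (induction n) (use assms in \<open>auto simp: permutes_in_image\<close>)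
  then show "y \<in> H" using y by simp
qed

lemma orb_eq_if_mem:
  assumes "permutation f" "y \<in> orb f x"
  shows "orb f y = orb f x"
proof -
  have x: "x \<in> orbit f x" using assms(1) by (rule permutation_self_in_orbit)
  have y: "y \<in> orbit f x" using assms(2) orb_eq_orbit[OF assms(1)] by simp
  have "orbit f y \<subseteq> orbit f x" using y orbit_trans[of _ f y x] by blast
  moreover have "orbit f x \<subseteq> orbit f y" using orbit_swap[OF x y] orbit_trans[of _ f x y] by blast
  ultimately show ?thesis using orb_eq_orbit[OF assms(1)] by simp
qed

lemma orb_apply:
  assumes "permutation f"
  shows "orb f (f x) = orb f x"
proof -
  have "f x \<in> orb f x" using funpow_in_orb[of 1 f x] by simp
  then show ?thesis by (rule orb_eq_if_mem[OF assms])
qed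

lemma orb_disjoint:
  assumes "permutation f" "orb f x \<noteq> orb f y"
  shows "orb f x \<inter> orb f y = {}"
proof (rule ccontr)
  assume "orb f x \<inter> orb f y \<noteq> {}"
  then obtain z where zx: "z \<in> orb f x" and zy: "z \<in> orb f y" by blast
  have "orb f z = orb f x" using zx by (rule orb_eq_if_mem[OF assms(1)])
  moreover have "orb f z = orb f y" using zy by (rule orb_eq_if_mem[OF assms(1)])
  ultimately show False using assms(2) by simp
qed

lemma card_eq_mult_card_orbs:
  assumes "f permutes H" "finite H" "\<And>h. h \<in> H \<Longrightarrow> card (orb f h) = m"
  shows "card H = m * card (orb f ` H)"
proof -
  have pf: "permutation f" using assms permutation_permutes by blast
  have "\<Union> (orb f ` H) = H" using orb_subset[OF assms(1)] self_in_orb by fast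
  moreover have "pairwise disjnt (orb f ` H)"
    unfolding pairwise_def disjnt_def using orb_disjoint[OF pf] by auto
  moreover have "finite A" if "A \<in> orb f ` H" for A
    using that orb_subset[OF assms(1)] assms(2) by (auto intro: finite_subset)
  ultimately have "card H = sum card (orb f ` H)" using card_Union_disjoint by metis
  also have "\<dots> = (\<Sum>_\<in>orb f ` H. m)" using assms(3) by (intro sum.cong) auto
  finally show ?thesis by simp
qed

lemma orb_card_4:
  assumes "f permutes H" "finite H" "card (orb f h) = 4"
  shows "(f ^^ 4) h = h" "orb f h = {h, f h, f (f h), f (f (f h))}"
    "distinct [h, f h, f (f h), f (f (f h))]"
proof -
  have pf: "permutation f" using assms permutation_permutes by blast
  have hs: "h \<in> orbit f h" using pf permutation_self_in_orbit by metis
  define d where "d = funpow_dist1 f h h"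
  have o: "orbit f h = (\<lambda>n. (f ^^ n) h) ` {0..<d}" using orbit_conv_funpow_dist1[OF hs] d_def by simp
  have inj: "inj_on (\<lambda>n. (f ^^ n) h) {0..<d}" using inj_on_funpow_dist1[OF hs] d_def by simp
  have "card (orbit f h) = d" using o inj card_image by fastforce
  then have d4: "d = 4" using assms(3) orb_eq_orbit[OF pf] by simp
  show "(f ^^ 4) h = h" using funpow_dist1_prop[OF hs] unfolding d_def[symmetric] d4 .
  have e: "{0..<4::nat} = {0, 1, 2, 3}" by auto
  have n: "(f ^^ 2) h = f (f h)" "(f ^^ 3) h = f (f (f h))" by (simp_all add: numeral_eq_Suc)
  show "orb f h = {h, f h, f (f h), f (f (f h))}"
    using o d4 orb_eq_orbit[OF pf] e n by auto
  have ne: "\<And>i j. i < 4 \<Longrightarrow> j < 4 \<Longrightarrow> i \<noteq> j \<Longrightarrow> (f ^^ i) h \<noteq> (f ^^ j) h"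
    using inj d4 unfolding inj_on_def by auto
  show "distinct [h, f h, f (f h), f (f (f h))]"
    using ne[of 0 1] ne[of 0 2] ne[of 0 3] ne[of 1 2] ne[of 1 3] ne[of 2 3] n by auto
qed

section \<open>Integer linear systems solvable modulo every modulus\<close>

lemma det_cong_mod:
  fixes A B :: "int mat"
  assumes A: "A \<in> carrier_mat n n" and B: "B \<in> carrier_mat n n"
    and cong: "\<forall>i<n. \<forall>j<n. A$$(i,j) mod m = B$$(i,j) mod m"
  shows "det A mod m = det B mod m"
proof -
  have prod_cong: "(\<Prod>i=0..<n. A$$(i,p i)) mod m = (\<Prod>i=0..<n. B$$(i,p i)) mod m"
    if p: "p permutes {0..<n}" for p
  proof -
    have pi: "\<And>i. i \<in> {0..<n} \<Longrightarrow> p i < n" using p permutes_in_image by fastforce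
    have "(\<Prod>i=0..<n. A$$(i,p i) mod m) = (\<Prod>i=0..<n. B$$(i,p i) mod m)"
      using cong pi by (intro prod.cong) auto
    then have "(\<Prod>i=0..<n. A$$(i,p i) mod m) mod m = (\<Prod>i=0..<n. B$$(i,p i) mod m) mod m"
      by simp
    then show ?thesis by (simp add: mod_prod_eq)
  qed
  have term_cong: "(signof p * (\<Prod>i=0..<n. A$$(i,p i))) mod m = (signof p * (\<Prod>i=0..<n. B$$(i,p i))) mod m"
    if p: "p permutes {0..<n}" for p
    by (rule mod_mult_cong[OF refl prod_cong[OF p]])
  have det_A: "det A mod m = (\<Sum>p\<in>{p. p permutes {0..<n}}. (signof p * (\<Prod>i=0..<n. A$$(i,p i))) mod m) mod m"
    using det_def'[OF A] by (simp add: mod_sum_eq)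
  have det_B: "det B mod m = (\<Sum>p\<in>{p. p permutes {0..<n}}. (signof p * (\<Prod>i=0..<n. B$$(i,p i))) mod m) mod m"
    using det_def'[OF B] by (simp add: mod_sum_eq)
  have "(\<Sum>p\<in>{p. p permutes {0..<n}}. (signof p * (\<Prod>i=0..<n. A$$(i,p i))) mod m)
     = (\<Sum>p\<in>{p. p permutes {0..<n}}. (signof p * (\<Prod>i=0..<n. B$$(i,p i))) mod m)"
    using term_cong by (intro sum.cong) auto
  then show ?thesis using det_A det_B by simp
qed

lemma det_unit_mod_if_solvable_mod:
  fixes f :: "nat \<Rightarrow> nat \<Rightarrow> int"
  assumes m: "m \<ge> 2" and solvable: "\<And>c. \<exists>x. \<forall>i<n. m dvd ((\<Sum>j<n. f i j * x j) - c i)"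
  shows "\<exists>e. (det (mat n n (\<lambda>(i, j). f i j)) * e) mod m = 1"
proof -
  define A where "A = mat n n (\<lambda>(i, j). f i j)"
  have A: "A \<in> carrier_mat n n" unfolding A_def by simp
  have "\<forall>j. \<exists>x. \<forall>i<n. m dvd ((\<Sum>l<n. f i l * x l) - (if i = j then 1 else 0))"
  proof
    fix j show "\<exists>x. \<forall>i<n. m dvd ((\<Sum>l<n. f i l * x l) - (if i = j then 1 else 0))"
      using solvable[of "\<lambda>i. if i = j then 1 else 0"] by simp
  qed
  from choice[OF this] obtain X
    where "\<forall>j. \<forall>i<n. m dvd ((\<Sum>l<n. f i l * X j l) - (if i = j then 1 else 0))" by blast
  then have X: "\<And>j i. i < n \<Longrightarrow> m dvd ((\<Sum>l<n. f i l * X j l) - (if i = j then 1 else 0))"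
    by blast
  define B where "B = mat n n (\<lambda>(l, j). X j l)"
  have B: "B \<in> carrier_mat n n" unfolding B_def by simp
  have "\<forall>i<n. \<forall>j<n. (A * B) $$ (i, j) mod m = (1\<^sub>m n) $$ (i, j) mod m"
  proof (intro allI impI)
    fix i j assume ij: "i < n" "j < n"
    have "(A * B) $$ (i, j) = (\<Sum>l<n. f i l * X j l)"
      using ij unfolding A_def B_def by (simp add: scalar_prod_def atLeast0LessThan)
    then show "(A * B) $$ (i, j) mod m = (1\<^sub>m n) $$ (i, j) mod m"
      using X[OF ij(1), of j] ij by (simp add: mod_eq_dvd_iff)
  qed
  from det_cong_mod[OF mult_carrier_mat[OF A B] one_carrier_mat this]
  have "det (A * B) mod m = 1" using m by simp
  then have "(det A * det B) mod m = 1" using det_mult[OF A B] by simp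
  then show ?thesis unfolding A_def by blast
qed

lemma sq_eq_1_if_unit_mod_all:
  fixes d :: int
  assumes "\<And>m. m \<ge> 2 \<Longrightarrow> \<exists>e. (d * e) mod m = 1"
  shows "d * d = 1"
proof (rule ccontr)
  assume "d * d \<noteq> 1"
  then have "\<bar>d\<bar> \<noteq> 1" by (auto simp: abs_if split: if_splits)
  moreover have "d \<noteq> 0" using assms[of 2] by auto
  ultimately have "\<bar>d\<bar> \<ge> 2" by linarith
  from assms[OF this] obtain e where "(d * e) mod \<bar>d\<bar> = 1" by blast
  then show False by simp
qed

text \<open>With \<open>(det A)\<^sup>2 = 1\<close>, the vector \<open>x = det A \<cdot> adj A \<cdot> c\<close> solves \<open>A x = c\<close>.\<close>

lemma int_linear_system_solvable_if_det_sq_1: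
  fixes f :: "nat \<Rightarrow> nat \<Rightarrow> int" and n :: nat
  defines "d \<equiv> det (mat n n (\<lambda>(i, j). f i j))"
  assumes d_sq: "d * d = 1"
  shows "\<exists>x. \<forall>i<n. (\<Sum>j<n. f i j * x j) = c i"
proof -
  define A where "A = mat n n (\<lambda>(i, j). f i j)"
  have A: "A \<in> carrier_mat n n" unfolding A_def by simp
  define Adj where "Adj = adj_mat A"
  have Adj: "Adj \<in> carrier_mat n n" using adj_mat(1)[OF A] Adj_def by simp
  have A_Adj: "A * Adj = d \<cdot>\<^sub>m 1\<^sub>m n" using adj_mat(2)[OF A] Adj_def d_def A_def by simp
  have A_Adj_entry: "(\<Sum>j<n. f i j * Adj $$ (j, l)) = (if i = l then d else 0)"
    if "i < n" "l < n" for i l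
  proof -
    have "(A * Adj) $$ (i, l) = (\<Sum>j<n. f i j * Adj $$ (j, l))"
      using that Adj unfolding A_def by (simp add: scalar_prod_def atLeast0LessThan)
    then show ?thesis using A_Adj that by (auto split: if_splits)
  qed
  define x where "x = (\<lambda>j. d * (\<Sum>l<n. Adj $$ (j, l) * c l))"
  have "(\<Sum>j<n. f i j * x j) = c i" if i: "i < n" for i
  proof -
    have "(\<Sum>j<n. f i j * x j) = (\<Sum>j<n. \<Sum>l<n. d * (f i j * Adj $$ (j, l) * c l))"
      unfolding x_def by (simp add: sum_distrib_left mult_ac)
    also have "\<dots> = (\<Sum>l<n. \<Sum>j<n. d * (f i j * Adj $$ (j, l) * c l))"
      by (rule sum.swap)
    also have "\<dots> = d * (\<Sum>l<n. (\<Sum>j<n. f i j * Adj $$ (j, l)) * c l)"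
      by (simp add: sum_distrib_left sum_distrib_right mult_ac)
    also have "\<dots> = d * (\<Sum>l<n. (if i = l then d * c l else 0))"
      using A_Adj_entry[OF i] by (intro arg_cong[where f = "\<lambda>z. d * z"] sum.cong) auto
    also have "\<dots> = d * d * c i" using i by simp
    finally show ?thesis using d_sq by simp
  qed
  then show ?thesis by blast
qed

lemma int_linear_system_solvable:
  fixes f :: "nat \<Rightarrow> nat \<Rightarrow> int"
  assumes mod_solvable: "\<And>m c. m \<ge> 2 \<Longrightarrow> \<exists>x. \<forall>i<n. m dvd ((\<Sum>j<n. f i j * x j) - c i)"
  shows "\<exists>x. \<forall>i<n. (\<Sum>j<n. f i j * x j) = c i"
proof (rule int_linear_system_solvable_if_det_sq_1)
  show "det (mat n n (\<lambda>(i, j). f i j)) * det (mat n n (\<lambda>(i, j). f i j)) = 1"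
    using det_unit_mod_if_solvable_mod[OF _ mod_solvable] by (intro sq_eq_1_if_unit_mod_all)
qed

lemma int_linear_system_solvable_finite:
  fixes f :: "'i \<Rightarrow> 'j \<Rightarrow> int"
  assumes I: "finite I" and J: "finite J" and card_eq: "card I = card J"
    and mod_solvable: "\<And>m c. m \<ge> 2 \<Longrightarrow> \<exists>x. \<forall>i\<in>I. m dvd ((\<Sum>j\<in>J. f i j * x j) - c i)"
  shows "\<exists>x. \<forall>i\<in>I. (\<Sum>j\<in>J. f i j * x j) = c i"
proof -
  define n where "n = card J"
  obtain bi where bi: "bij_betw bi {0..<n} I" using ex_bij_betw_nat_finite[OF I] card_eq n_def by auto
  obtain bj where bj: "bij_betw bj {0..<n} J" using ex_bij_betw_nat_finite[OF J] n_def by auto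
  have reindex: "(\<Sum>j\<in>J. f i j * x j) = (\<Sum>l<n. f i (bj l) * x (bj l))" for i x
    using sum.reindex_bij_betw[OF bj, of "\<lambda>j. f i j * x j"] by (simp add: atLeast0LessThan)
  have "\<exists>y. \<forall>l<n. (\<Sum>l'<n. f (bi l) (bj l') * y l') = c (bi l)"
  proof (rule int_linear_system_solvable)
    fix m :: int and c' :: "nat \<Rightarrow> int" assume m: "m \<ge> 2"
    obtain x where x: "\<forall>i\<in>I. m dvd ((\<Sum>j\<in>J. f i j * x j) - c' (inv_into {0..<n} bi i))"
      using mod_solvable[OF m, of "\<lambda>i. c' (inv_into {0..<n} bi i)"] by blast
    have "m dvd ((\<Sum>l'<n. f (bi l) (bj l') * x (bj l')) - c' l)" if "l < n" for l
    proof -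
      have inv: "inv_into {0..<n} bi (bi l) = l" using bij_betw_inv_into_left[OF bi] that by simp
      have "bi l \<in> I" using bij_betwE[OF bi] that by simp
      then have "m dvd ((\<Sum>j\<in>J. f (bi l) j * x j) - c' (inv_into {0..<n} bi (bi l)))"
        using x by blast
      then show ?thesis using reindex[of "bi l" x] inv by simp
    qed
    then show "\<exists>y. \<forall>l<n. m dvd ((\<Sum>l'<n. f (bi l) (bj l') * y l') - c' l)"
      by (intro exI[where x = "\<lambda>l'. x (bj l')"]) simp
  qed
  then obtain y where y: "\<And>l. l < n \<Longrightarrow> (\<Sum>l'<n. f (bi l) (bj l') * y l') = c (bi l)" by blast
  define x where "x j = y (inv_into {0..<n} bj j)" for j
  have "(\<Sum>j\<in>J. f i j * x j) = c i" if i: "i \<in> I" for i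
  proof -
    define l where "l = inv_into {0..<n} bi i"
    have l: "l < n" "bi l = i"
      using bij_betw_inv_into_right[OF bi i] bij_betwE[OF bij_betw_inv_into[OF bi]] i l_def by auto
    have "\<And>l'. l' < n \<Longrightarrow> x (bj l') = y l'" using bij_betw_inv_into_left[OF bj] by (simp add: x_def)
    then show ?thesis using reindex[of i x] y[OF l(1)] l(2) by simp
  qed
  then show ?thesis by blast
qed

lemma dvd_mod_diff_self: "(m::int) dvd (x mod m - x)"
  by (metis dvd_minus_iff minus_diff_eq mod_eq_dvd_iff mod_mod_trivial)

lemma eq_0_if_dvd_in_range: "0 \<le> x \<Longrightarrow> x < m \<Longrightarrow> m dvd x \<Longrightarrow> x = (0::int)"
  by (metis dvd_eq_mod_eq_0 mod_pos_pos_trivial)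

lemma dvd_unit_mult_diff_iff:
  fixes e :: int
  assumes "e * e = 1"
  shows "m dvd (t * e - u) \<longleftrightarrow> m dvd (t - e * u)"
proof
  have "(t * e - u) * e = t * (e * e) - e * u" by (simp add: algebra_simps)
  moreover assume "m dvd (t * e - u)"
  then have "m dvd (t * e - u) * e" by (rule dvd_mult2)
  ultimately show "m dvd (t - e * u)" using assms by simp
next
  have "(t - e * u) * e = t * e - (e * e) * u" by (simp add: algebra_simps)
  moreover assume "m dvd (t - e * u)"
  then have "m dvd (t - e * u) * e" by (rule dvd_mult2)
  ultimately show "m dvd (t * e - u)" using assms by simp
qed

text \<open>The residues \<open>t\<close> modulo \<open>k\<close> with \<open>2 t = 0\<close> are \<open>0\<close>, and \<open>k / 2\<close> when \<open>k\<close> is even.\<close>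

lemma card_residues_double_zero:
  assumes "0 < k"
  shows "card {t. 0 \<le> t \<and> t < int k \<and> int k dvd 2 * t} = (if odd k then 1 else 2)"
proof (cases "odd k")
  case True
  have "t = 0" if t: "0 \<le> t" "t < int k" "int k dvd 2 * t" for t
  proof -
    have "coprime (int k) 2" using True by (simp add: coprime_commute)
    then have "t mod int k = 0" using t(3) by (simp add: coprime_dvd_mult_right_iff)
    then show ?thesis using t(1,2) by simp
  qed
  then have "{t. 0 \<le> t \<and> t < int k \<and> int k dvd 2 * t} = {0}" using assms by auto
  then show ?thesis using True by simp
next
  case False
  then obtain m where m: "k = 2 * m" by blast
  have "t \<in> {0, int m}" if t: "0 \<le> t" "t < int k" "int k dvd 2 * t" for t
  proof -
    obtain j where j: "2 * t = int k * j" using t(3) by (elim dvdE)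
    have "0 \<le> int k * j" "int k * j < int k * 2" using t j by linarith+
    moreover have "0 < int k" using assms by simp
    ultimately have "0 \<le> j" "j < 2"
      by (simp_all add: zero_le_mult_iff mult_less_cancel_left_pos)
    then have "j = 0 \<or> j = 1" by auto
    then show ?thesis using j m by auto
  qed
  then have "{t. 0 \<le> t \<and> t < int k \<and> int k dvd 2 * t} = {0, int m}" using m assms by auto
  then show ?thesis using False m assms by simp
qed

lemma card_eq_card_image_mult:
  assumes "finite A" "\<And>y. y \<in> f ` A \<Longrightarrow> card {x\<in>A. f x = y} = m"
  shows "card A = card (f ` A) * m"
proof -
  have "card A = card (\<Union>y\<in>f ` A. {x\<in>A. f x = y})" by (rule arg_cong[where f = card]) auto
  also have "\<dots> = (\<Sum>y\<in>f ` A. card {x\<in>A. f x = y})"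
    using assms(1) by (intro card_UN_disjoint) auto
  also have "\<dots> = (\<Sum>y\<in>f ` A. m)" using assms(2) by simp
  finally show ?thesis by simp
qed

lemma card_vecs:
  assumes A: "finite A" and k: "0 < k"
  shows "card (vecs k A) = k ^ card A"
proof -
  have inj: "inj_on (\<lambda>p. restrict p A) (vecs k A)"
  proof (rule inj_onI)
    fix p q assume p: "p \<in> vecs k A" and q: "q \<in> vecs k A" and e: "restrict p A = restrict q A"
    show "p = q"
    proof
      fix x show "p x = q x"
        using p q fun_cong[OF e, of x] unfolding vecs_def by (cases "x \<in> A") auto
    qed
  qed
  have im: "(\<lambda>p. restrict p A) ` vecs k A = PiE A (\<lambda>_. {0..<int k})"
  proof (intro subset_antisym subsetI)
    fix f assume "f \<in> (\<lambda>p. restrict p A) ` vecs k A"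
    then show "f \<in> PiE A (\<lambda>_. {0..<int k})" using k unfolding vecs_def by auto
  next
    fix f assume f: "f \<in> PiE A (\<lambda>_. {0..<int k})"
    define p where "p x = (if x \<in> A then f x else 0)" for x
    have "p \<in> vecs k A" using f k unfolding vecs_def p_def by auto
    moreover have "restrict p A = f"
      using f unfolding p_def by (auto simp: restrict_def PiE_def extensional_def)
    ultimately show "f \<in> (\<lambda>p. restrict p A) ` vecs k A" by force
  qed
  have "card (vecs k A) = card (PiE A (\<lambda>_. {0..<int k}))" using card_image[OF inj] im by simp
  also have "\<dots> = k ^ card A" using A by (simp add: card_PiE)
  finally show ?thesis .
qed

lemma finite_vecs: "finite A \<Longrightarrow> 0 < k \<Longrightarrow> finite (vecs k A)"
  using card_vecs card.infinite by fastforce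

lemma vecs_vanishing_on: "S \<subseteq> A \<Longrightarrow> {p \<in> vecs k A. \<forall>r\<in>S. p r = 0} = vecs k (A - S)"
  unfolding vecs_def by auto

lemma vecs_mod_eq:
  assumes "p \<in> vecs k A" "0 < k"
  shows "p x mod int k = p x"
  using assms unfolding vecs_def by (cases "x \<in> A") auto

lemma mod_in_vecs: "0 < k \<Longrightarrow> (\<And>x. x \<notin> A \<Longrightarrow> p x = 0) \<Longrightarrow> (\<lambda>x. p x mod int k) \<in> vecs k A"
  unfolding vecs_def by auto

lemma vecs_eq_if_cong:
  assumes "p \<in> vecs k A" "q \<in> vecs k A" "0 < k" "\<And>x. x \<in> A \<Longrightarrow> int k dvd (p x - q x)"
  shows "p = q"
proof
  fix x
  have "p x mod int k = q x mod int k"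
    using assms(1,2,4) unfolding vecs_def by (cases "x \<in> A") (auto simp: mod_eq_dvd_iff)
  then show "p x = q x" using vecs_mod_eq[OF assms(1,3)] vecs_mod_eq[OF assms(2,3)] by simp
qed

text \<open>Darts are corners: the dart \<open>x\<close> lies at the crossing \<open>vertex_of x\<close> and in the region
  \<open>region_of x\<close>.\<close>

locale shaded_knot_diagram =
  fixes H :: "'d set" and \<sigma> \<alpha> :: "'d \<Rightarrow> 'd" and sh :: "'d set set" and sg :: "'d set \<Rightarrow> bool"
  assumes knot: "knot_diagram H \<sigma> \<alpha>" and reduced_diagram: "reduced H \<sigma> \<alpha>"
    and shading: "checkerboard H \<sigma> \<alpha> sh"
    and signing: "alternating_signing H \<sigma> \<alpha> sh sg"
begin

abbreviation "F \<equiv> regions H \<sigma> \<alpha>"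
abbreviation "VS \<equiv> verts H \<sigma>"

lemma finite_H: "finite H"
  and sigma_permutes: "\<sigma> permutes H" and alpha_permutes: "\<alpha> permutes H"
  and alpha_no_fixpoint: "h \<in> H \<Longrightarrow> \<alpha> h \<noteq> h" and alpha_alpha: "h \<in> H \<Longrightarrow> \<alpha> (\<alpha> h) = h"
  and card_orb_sigma: "h \<in> H \<Longrightarrow> card (orb \<sigma> h) = 4"
  and connected: "map_connected H \<sigma> \<alpha>"
  and euler: "int (card (verts H \<sigma>)) - int (card (edges H \<alpha>)) + int (card (regions H \<sigma> \<alpha>)) = 2"
  and card_straight_orbits: "card (straight_orbits H \<sigma> \<alpha>) = 2"
  using knot unfolding knot_diagram_def by auto

lemma sigma_alpha_permutes: "\<sigma> \<circ> \<alpha> permutes H"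
  using permutes_compose[OF alpha_permutes sigma_permutes] .

lemma perm_sigma_alpha: "permutation (\<sigma> \<circ> \<alpha>)"
  using sigma_alpha_permutes finite_H permutation_permutes by blast

lemma sigma_in_H: "x \<in> H \<Longrightarrow> \<sigma> x \<in> H"
  using sigma_permutes by (simp add: permutes_in_image)

lemma alpha_in_H: "x \<in> H \<Longrightarrow> \<alpha> x \<in> H"
  using alpha_permutes by (simp add: permutes_in_image)

lemma inj_sigma: "inj \<sigma>"
  using sigma_permutes by (rule permutes_inj)

lemma inj_alpha: "inj \<alpha>"
  using alpha_permutes by (rule permutes_inj)

lemma sigma_4: "x \<in> H \<Longrightarrow> \<sigma> (\<sigma> (\<sigma> (\<sigma> x))) = x"
  using orb_card_4(1)[OF sigma_permutes finite_H card_orb_sigma] by (simp add: numeral_eq_Suc)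

definition vertex_of :: "'d \<Rightarrow> 'd set" where
  "vertex_of x = orb \<sigma> x"

definition region_of :: "'d \<Rightarrow> 'd set" where
  "region_of x = orb (\<sigma> \<circ> \<alpha>) x"

lemma vertex_of_eq: "x \<in> H \<Longrightarrow> vertex_of x = {x, \<sigma> x, \<sigma> (\<sigma> x), \<sigma> (\<sigma> (\<sigma> x))}"
  unfolding vertex_of_def using orb_card_4(2)[OF sigma_permutes finite_H card_orb_sigma] .

lemma distinct_corners: "x \<in> H \<Longrightarrow> distinct [x, \<sigma> x, \<sigma> (\<sigma> x), \<sigma> (\<sigma> (\<sigma> x))]"
  using orb_card_4(3)[OF sigma_permutes finite_H card_orb_sigma] .

lemma vertex_of_subset: "x \<in> H \<Longrightarrow> vertex_of x \<subseteq> H"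
  unfolding vertex_of_def using orb_subset[OF sigma_permutes] .

lemma verts_eq: "VS = vertex_of ` H"
  unfolding verts_def vertex_of_def by simp

lemma finite_vertex_of: "x \<in> H \<Longrightarrow> finite (vertex_of x)"
  using vertex_of_eq by simp

lemma card_vertex_of: "x \<in> H \<Longrightarrow> card (vertex_of x) = 4"
  using card_orb_sigma vertex_of_def by simp

lemma self_in_region_of: "x \<in> region_of x"
  unfolding region_of_def by (rule self_in_orb)

lemma regions_eq: "F = region_of ` H"
  unfolding regions_def region_of_def by simp

lemma region_of_in_regions: "x \<in> H \<Longrightarrow> region_of x \<in> F"
  using regions_eq by simp

lemma region_of_eq: "y \<in> region_of x \<Longrightarrow> region_of y = region_of x"
  unfolding region_of_def using orb_eq_if_mem[OF perm_sigma_alpha] .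

lemma region_of_sigma_alpha: "region_of (\<sigma> (\<alpha> x)) = region_of x"
  unfolding region_of_def using orb_apply[OF perm_sigma_alpha, of x] by simp

lemma region_of_sigma: "x \<in> H \<Longrightarrow> region_of (\<sigma> x) = region_of (\<alpha> x)"
  using region_of_sigma_alpha[of "\<alpha> x"] alpha_alpha by simp

lemma region_of_eq_region: "r \<in> F \<Longrightarrow> x \<in> r \<Longrightarrow> region_of x = r"
  using regions_eq region_of_eq by auto

lemma finite_regions: "finite F"
  using regions_eq finite_H by simp

lemma finite_verts: "finite VS"
  using verts_eq finite_H by simp

lemma incident_regions_eq:
  assumes x: "x \<in> H"
  shows "{r \<in> F. incident (vertex_of x) r} = region_of ` vertex_of x"
proof (intro subset_antisym subsetI)
  fix r assume r: "r \<in> {r \<in> F. incident (vertex_of x) r}"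
  then obtain y where "y \<in> vertex_of x" "y \<in> r" unfolding incident_def by blast
  then show "r \<in> region_of ` vertex_of x" using region_of_eq_region r by blast
next
  fix r assume "r \<in> region_of ` vertex_of x"
  then obtain y where y: "y \<in> vertex_of x" "r = region_of y" by auto
  then have "y \<in> H" using vertex_of_subset x by auto
  then show "r \<in> {r \<in> F. incident (vertex_of x) r}"
    using y region_of_in_regions self_in_region_of unfolding incident_def by auto
qed

lemma inj_on_region_of:
  assumes x: "x \<in> H"
  shows "inj_on region_of (vertex_of x)"
proof -
  have "vertex_of x \<in> VS" using x verts_eq by simp
  then have "card {r \<in> F. incident (vertex_of x) r} = 4"
    using reduced_diagram unfolding reduced_def irreducible_vertex_def by blast
  then have "card (region_of ` vertex_of x) = card (vertex_of x)"
    using incident_regions_eq[OF x] card_vertex_of[OF x] by simp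
  then show ?thesis using inj_on_iff_eq_card finite_vertex_of[OF x] by blast
qed

lemma vertex_inter_region_of:
  assumes x: "x \<in> H" and y: "y \<in> vertex_of x"
  shows "vertex_of x \<inter> region_of y = {y}"
proof -
  have "z = y" if "z \<in> vertex_of x" "z \<in> region_of y" for z
    using inj_onD[OF inj_on_region_of[OF x] region_of_eq[OF that(2)] that(1) y] .
  then show ?thesis using y self_in_region_of by blast
qed

lemma orb_alpha:
  assumes h: "h \<in> H"
  shows "orb \<alpha> h = {h, \<alpha> h}"
proof -
  have "(\<alpha> ^^ n) h \<in> {h, \<alpha> h}" for n
    by (induction n) (use alpha_alpha[OF h] in auto)
  moreover have "h \<in> orb \<alpha> h" "\<alpha> h \<in> orb \<alpha> h"
    using self_in_orb funpow_in_orb[of 1 \<alpha> h] by auto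
  ultimately show ?thesis unfolding orb_def by auto
qed

lemma card_regions: "card F = card VS + 2"
proof -
  have "card H = 4 * card VS"
    unfolding verts_def using card_eq_mult_card_orbs[OF sigma_permutes finite_H card_orb_sigma] .
  moreover have "card (orb \<alpha> h) = 2" if "h \<in> H" for h
    using orb_alpha[OF that] alpha_no_fixpoint[OF that] by simp
  then have "card H = 2 * card (edges H \<alpha>)"
    unfolding edges_def using card_eq_mult_card_orbs[OF alpha_permutes finite_H] by blast
  ultimately show ?thesis using euler by linarith
qed

lemma darts_nonempty: "H \<noteq> {}"
proof
  assume "H = {}"
  then have "verts H \<sigma> = {}" "edges H \<alpha> = {}" "regions H \<sigma> \<alpha> = {}"
    unfolding verts_def edges_def regions_def by auto
  then show False using euler by simp
qed

lemma shaded_subset_regions: "sh \<subseteq> F"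
  using shading unfolding checkerboard_def by blast

lemma shaded_alpha:
  assumes x: "x \<in> H"
  shows "region_of (\<alpha> x) \<in> sh \<longleftrightarrow> region_of x \<notin> sh"
proof -
  have "adjacent \<alpha> (region_of x) (region_of (\<alpha> x))"
    unfolding adjacent_def using self_in_region_of by blast
  then show ?thesis
    using shading region_of_in_regions[OF x] region_of_in_regions[OF alpha_in_H[OF x]]
    unfolding checkerboard_def by blast
qed

lemma shaded_sigma: "x \<in> H \<Longrightarrow> region_of (\<sigma> x) \<in> sh \<longleftrightarrow> region_of x \<notin> sh"
  using shaded_alpha region_of_sigma by simp

lemma ex_shaded_unshaded: "\<exists>r0 r1. r0 \<in> F \<and> r0 \<in> sh \<and> r1 \<in> F \<and> r1 \<notin> sh"
proof -
  obtain h where h: "h \<in> H" using darts_nonempty by blast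
  have "region_of h \<in> F" "region_of (\<alpha> h) \<in> F" using region_of_in_regions h alpha_in_H by auto
  then show ?thesis using shaded_alpha[OF h] by (cases "region_of h \<in> sh") auto
qed

subsection \<open>Null patterns of the corner-sum matrix\<close>

definition shade_pattern :: "'d set \<Rightarrow> int" where
  "shade_pattern r = (if r \<in> sh then 1 else -1)"

definition sign_pattern :: "'d set \<Rightarrow> int" where
  "sign_pattern r = (if r \<in> sh then 0 else if sg r then 1 else -1)"

definition corner_sum :: "('d set \<Rightarrow> int) \<Rightarrow> 'd \<Rightarrow> int" where
  "corner_sum p x = (\<Sum>y\<in>vertex_of x. p (region_of y))"

lemma shade_pattern_sq: "shade_pattern r * shade_pattern r = 1"
  unfolding shade_pattern_def by simp

lemma sign_pattern_sq: "r \<notin> sh \<Longrightarrow> sign_pattern r * sign_pattern r = 1"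
  unfolding sign_pattern_def by simp

lemma corner_sum_eq:
  "x \<in> H \<Longrightarrow> corner_sum p x
     = p (region_of x) + p (region_of (\<sigma> x)) + p (region_of (\<sigma> (\<sigma> x))) + p (region_of (\<sigma> (\<sigma> (\<sigma> x))))"
  unfolding corner_sum_def using vertex_of_eq distinct_corners by simp

lemma corner_sum_lin:
  "corner_sum (\<lambda>r. u * p r + t * q r) x = u * corner_sum p x + t * corner_sum q x"
  unfolding corner_sum_def by (simp add: sum.distrib sum_distrib_left)

lemma corner_sum_shade_pattern: "x \<in> H \<Longrightarrow> corner_sum shade_pattern x = 0"
  using shaded_sigma[of x] shaded_sigma[of "\<sigma> x"] shaded_sigma[of "\<sigma> (\<sigma> x)"] sigma_in_H corner_sum_eq
  unfolding shade_pattern_def by auto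

text \<open>Around a crossing the shading alternates, so exactly two corners are unshaded; by the
  alternating signing they carry opposite signs.\<close>

lemma corner_sum_sign_pattern:
  assumes x: "x \<in> H"
  shows "corner_sum sign_pattern x = 0"
proof -
  let ?corners = "{region_of x, region_of (\<sigma> x), region_of (\<sigma> (\<sigma> x)), region_of (\<sigma> (\<sigma> (\<sigma> x)))}"
  have "vertex_of x \<in> VS" using verts_eq x by simp
  then obtain r r' where rr: "r \<in> F - sh" "r' \<in> F - sh" "incident (vertex_of x) r"
      "incident (vertex_of x) r'" "sg r \<noteq> sg r'"
    using signing unfolding alternating_signing_def by blast
  then have corners: "r \<in> ?corners" "r' \<in> ?corners"
    using incident_regions_eq[OF x] vertex_of_eq[OF x] by auto
  have s1: "region_of (\<sigma> x) \<in> sh \<longleftrightarrow> region_of x \<notin> sh" using shaded_sigma[OF x] .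
  have s2: "region_of (\<sigma> (\<sigma> x)) \<in> sh \<longleftrightarrow> region_of x \<in> sh"
    using shaded_sigma[OF sigma_in_H[OF x]] s1 by simp
  have s3: "region_of (\<sigma> (\<sigma> (\<sigma> x))) \<in> sh \<longleftrightarrow> region_of x \<notin> sh"
    using shaded_sigma[OF sigma_in_H[OF sigma_in_H[OF x]]] s2 by simp
  have "r \<noteq> r'" using rr by auto
  then show ?thesis using corners rr(1,2,5) s1 s2 s3 corner_sum_eq[OF x, of sign_pattern]
    unfolding sign_pattern_def by (cases "region_of x \<in> sh") auto
qed

subsection \<open>Walking straight ahead\<close>

text \<open>\<open>straight x\<close> is the dart reached from \<open>x\<close> by following its edge and going straight
  through the next crossing.\<close>

definition edge_sum :: "('d set \<Rightarrow> int) \<Rightarrow> 'd \<Rightarrow> int" where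
  "edge_sum p x = p (region_of x) + p (region_of (\<alpha> x))"

definition straight :: "'d \<Rightarrow> 'd" where
  "straight x = \<sigma> (\<sigma> (\<alpha> x))"

lemma straight_in_H: "x \<in> H \<Longrightarrow> straight x \<in> H"
  unfolding straight_def using sigma_in_H alpha_in_H by simp

lemma funpow_straight_in_H: "x \<in> H \<Longrightarrow> (straight ^^ n) x \<in> H"
  by (induction n) (auto simp: straight_in_H)

lemma inj_straight: "inj straight"
proof (rule injI)
  fix x y assume "straight x = straight y"
  then have "\<sigma> (\<sigma> (\<alpha> x)) = \<sigma> (\<sigma> (\<alpha> y))" by (simp add: straight_def)
  then show "x = y" using inj_sigma inj_alpha by (metis injD)
qed

lemma corner_sum_edge_sums:
  assumes x: "x \<in> H"
  shows "corner_sum p x = edge_sum p x + edge_sum p (\<sigma> (\<sigma> x))"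
proof -
  have "region_of (\<sigma> x) = region_of (\<alpha> x)" by (rule region_of_sigma[OF x])
  moreover have "region_of (\<sigma> (\<sigma> (\<sigma> x))) = region_of (\<alpha> (\<sigma> (\<sigma> x)))"
    by (rule region_of_sigma[OF sigma_in_H[OF sigma_in_H[OF x]]])
  ultimately show ?thesis unfolding corner_sum_eq[OF x] edge_sum_def by (simp add: add.assoc)
qed

lemma edge_sum_alpha: "x \<in> H \<Longrightarrow> edge_sum p (\<alpha> x) = edge_sum p x"
  unfolding edge_sum_def using alpha_alpha by (simp add: add.commute)

lemma edge_sum_sign_pattern_sq:
  assumes x: "x \<in> H"
  shows "edge_sum sign_pattern x * edge_sum sign_pattern x = 1"
  using shaded_alpha[OF x] unfolding edge_sum_def sign_pattern_def by (cases "region_of x \<in> sh") auto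

lemma edge_sum_straight:
  assumes x: "x \<in> H" and null: "\<forall>y\<in>H. m dvd corner_sum p y"
  shows "m dvd (edge_sum p (straight x) + edge_sum p x)"
proof -
  have "m dvd corner_sum p (\<alpha> x)" using null alpha_in_H[OF x] by blast
  moreover have "corner_sum p (\<alpha> x) = edge_sum p x + edge_sum p (straight x)"
    using corner_sum_edge_sums[OF alpha_in_H[OF x]] edge_sum_alpha[OF x] straight_def by simp
  ultimately show ?thesis by (simp add: add.commute)
qed

lemma edge_sum_funpow_straight:
  assumes x: "x \<in> H" and null: "\<forall>y\<in>H. m dvd corner_sum p y"
  shows "m dvd (edge_sum p ((straight ^^ j) x) - (-1) ^ j * edge_sum p x)"
proof (induction j)
  case 0 then show ?case by simp
next
  case (Suc j)
  have y: "(straight ^^ j) x \<in> H" using funpow_straight_in_H x by blast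
  have "edge_sum p ((straight ^^ Suc j) x) - (-1) ^ Suc j * edge_sum p x =
      (edge_sum p (straight ((straight ^^ j) x)) + edge_sum p ((straight ^^ j) x))
      - (edge_sum p ((straight ^^ j) x) - (-1) ^ j * edge_sum p x)" by simp
  also have "m dvd \<dots>" using edge_sum_straight[OF y null] Suc by (rule dvd_diff)
  finally show ?case .
qed

lemma straight_alpha_straight: "x \<in> H \<Longrightarrow> straight (\<alpha> (straight x)) = \<alpha> x"
  unfolding straight_def using alpha_alpha sigma_in_H alpha_in_H sigma_4 by simp

lemma funpow_straight_alpha: "x \<in> H \<Longrightarrow> (straight ^^ i) (\<alpha> ((straight ^^ i) x)) = \<alpha> x"
proof (induction i)
  case 0 then show ?case by simp
next
  case (Suc i)
  have y: "(straight ^^ i) x \<in> H" using funpow_straight_in_H Suc by blast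
  have "(straight ^^ Suc i) z = (straight ^^ i) (straight z)" for z
    by (simp add: funpow_Suc_right del: funpow.simps)
  then have "(straight ^^ Suc i) (\<alpha> ((straight ^^ Suc i) x))
      = (straight ^^ i) (straight (\<alpha> (straight ((straight ^^ i) x))))"
    by simp
  also have "\<dots> = (straight ^^ i) (\<alpha> ((straight ^^ i) x))" using straight_alpha_straight[OF y] by simp
  finally show ?case using Suc by simp
qed

text \<open>By \<open>funpow_straight_alpha\<close>, \<open>\<alpha> x = straight\<^sup>j x\<close> would give a dart \<open>z\<close> (halfway along)
  with \<open>\<alpha> z = z\<close> or \<open>\<alpha> z = straight z\<close>; neither is possible.\<close>

lemma alpha_notin_straight_orb:
  assumes x: "x \<in> H"
  shows "\<alpha> x \<notin> orb straight x"
proof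
  assume "\<alpha> x \<in> orb straight x"
  then obtain j where j: "\<alpha> x = (straight ^^ j) x" unfolding orb_def by auto
  have halfway: "\<alpha> ((straight ^^ i) x) = (straight ^^ (j - i)) x" if "i \<le> j" for i
  proof -
    have "(straight ^^ i) (\<alpha> ((straight ^^ i) x)) = (straight ^^ i) ((straight ^^ (j - i)) x)"
      using funpow_straight_alpha[OF x, of i] j that
      by (simp add: funpow_add[symmetric, THEN fun_cong, simplified comp_def])
    then show ?thesis using inj_fn[OF inj_straight, of i] by (simp add: inj_def)
  qed
  show False
  proof (cases "even j")
    case True
    then obtain i where "j = 2 * i" by blast
    then have "\<alpha> ((straight ^^ i) x) = (straight ^^ i) x" using halfway[of i] by simp
    then show False using alpha_no_fixpoint funpow_straight_in_H x by blast
  next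
    case False
    then obtain i where "j = 2 * i + 1" using oddE by blast
    then have "\<alpha> ((straight ^^ i) x) = straight ((straight ^^ i) x)" using halfway[of i] by simp
    then have e: "\<sigma> (\<sigma> (\<alpha> ((straight ^^ i) x))) = \<alpha> ((straight ^^ i) x)" unfolding straight_def by simp
    have "\<alpha> ((straight ^^ i) x) \<in> H" using alpha_in_H funpow_straight_in_H x by blast
    then show False using distinct_corners[of "\<alpha> ((straight ^^ i) x)"] e by auto
  qed
qed

lemma straight_orbs_cover:
  assumes x: "x \<in> H" and y: "y \<in> H"
  shows "y \<in> orb straight x \<or> y \<in> orb straight (\<alpha> x)"
proof -
  have orbs: "straight_orbits H \<sigma> \<alpha> = orb straight ` H"
    unfolding straight_orbits_def straight_def[abs_def] ..
  have "orb straight x \<noteq> orb straight (\<alpha> x)"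
    using alpha_notin_straight_orb[OF x] self_in_orb[of "\<alpha> x" straight] by auto
  then have "card {orb straight x, orb straight (\<alpha> x)} = 2" by simp
  moreover have "{orb straight x, orb straight (\<alpha> x)} \<subseteq> straight_orbits H \<sigma> \<alpha>"
    using orbs x alpha_in_H[OF x] by auto
  ultimately have "{orb straight x, orb straight (\<alpha> x)} = orb straight ` H"
    using card_subset_eq[of "straight_orbits H \<sigma> \<alpha>"] card_straight_orbits orbs finite_H by simp
  then have "orb straight y \<in> {orb straight x, orb straight (\<alpha> x)}" using y by auto
  then show ?thesis using self_in_orb[of y straight] by auto
qed

lemma edge_sums_vanish:
  assumes null: "\<forall>x\<in>H. m dvd corner_sum p x" and h0: "h0 \<in> H" "edge_sum p h0 = 0" and y: "y \<in> H"
  shows "m dvd edge_sum p y"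
  using straight_orbs_cover[OF h0(1) y]
proof
  assume "y \<in> orb straight h0"
  then obtain j where "y = (straight ^^ j) h0" unfolding orb_def by auto
  then show ?thesis using edge_sum_funpow_straight[OF h0(1) null, of j] h0(2) by simp
next
  assume "y \<in> orb straight (\<alpha> h0)"
  then obtain j where "y = (straight ^^ j) (\<alpha> h0)" unfolding orb_def by auto
  then show ?thesis
    using edge_sum_funpow_straight[OF alpha_in_H[OF h0(1)] null, of j] h0(2) edge_sum_alpha[OF h0(1)]
    by simp
qed

text \<open>If all edge sums vanish, the shade-weighted value \<open>shade_pattern r * p r\<close> does not change
  across an edge, so by connectivity it is constant.\<close>

lemma shade_multiple_if_edge_sums_vanish:
  assumes edge: "\<forall>x\<in>H. m dvd edge_sum p x"
  shows "\<exists>u. \<forall>r\<in>F. m dvd (p r - u * shade_pattern r)"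
proof -
  obtain h0 where h0: "h0 \<in> H" using darts_nonempty by blast
  define q where "q x = shade_pattern (region_of x) * p (region_of x)" for x
  have q_alpha: "m dvd (q (\<alpha> x) - q x)" if x: "x \<in> H" for x
  proof -
    have "shade_pattern (region_of (\<alpha> x)) = - shade_pattern (region_of x)"
      using shaded_alpha[OF x] unfolding shade_pattern_def by auto
    then have "q (\<alpha> x) - q x = - shade_pattern (region_of x) * edge_sum p x"
      unfolding q_def edge_sum_def by (simp add: algebra_simps)
    then show ?thesis using edge x by simp
  qed
  have q_sigma: "m dvd (q (\<sigma> x) - q x)" if x: "x \<in> H" for x
    using q_alpha[OF x] region_of_sigma[OF x] unfolding q_def by simp
  have q_const: "m dvd (q y - q h0)" if y: "y \<in> H" for y
  proof -
    have "(h0, y) \<in> {(x, y). x \<in> H \<and> (y = \<sigma> x \<or> y = \<alpha> x)}\<^sup>*"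
      using connected h0 y unfolding map_connected_def by blast
    then show ?thesis
    proof (induction rule: rtrancl_induct)
      case base then show ?case by simp
    next
      case (step y z)
      then have "y \<in> H" "z = \<sigma> y \<or> z = \<alpha> y" by auto
      then have "m dvd (q z - q y)" using q_alpha q_sigma by auto
      then have "m dvd ((q z - q y) + (q y - q h0))" using step.IH by (rule dvd_add)
      then show ?case by simp
    qed
  qed
  have "m dvd (p r - q h0 * shade_pattern r)" if r: "r \<in> F" for r
  proof -
    obtain y where y: "y \<in> H" "r = region_of y" using r regions_eq by auto
    have "p r - q h0 * shade_pattern r = shade_pattern r * (q y - q h0)"
      unfolding q_def using y shade_pattern_sq[of r] by (simp add: algebra_simps)
    then show ?thesis using q_const[OF y(1)] by simp
  qed
  then show ?thesis by blast
qed

text \<open>Subtracting a multiple of the signing makes one edge sum vanish; then all edge sums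
  vanish and what remains is a multiple of the checkerboard pattern.\<close>

lemma corner_sum_kernel:
  assumes null: "\<forall>x\<in>H. m dvd corner_sum p x"
  shows "\<exists>u t. \<forall>r\<in>F. m dvd (p r - (u * shade_pattern r + t * sign_pattern r))"
proof -
  obtain h0 where h0: "h0 \<in> H" using darts_nonempty by blast
  define t where "t = edge_sum p h0 * edge_sum sign_pattern h0"
  define p' where "p' = (\<lambda>r. p r - t * sign_pattern r)"
  have null': "\<forall>x\<in>H. m dvd corner_sum p' x"
  proof
    fix x assume x: "x \<in> H"
    have "corner_sum p' x = corner_sum p x - t * corner_sum sign_pattern x"
      unfolding p'_def corner_sum_def by (simp add: sum_subtractf sum_distrib_left)
    then show "m dvd corner_sum p' x" using null corner_sum_sign_pattern x by auto
  qed
  have "edge_sum p' h0 = edge_sum p h0 - t * edge_sum sign_pattern h0"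
    unfolding p'_def edge_sum_def by (simp add: algebra_simps)
  also have "\<dots> = edge_sum p h0 * (1 - edge_sum sign_pattern h0 * edge_sum sign_pattern h0)"
    unfolding t_def by (simp add: algebra_simps)
  finally have "edge_sum p' h0 = 0" using edge_sum_sign_pattern_sq[OF h0] by simp
  then have "\<forall>x\<in>H. m dvd edge_sum p' x" using edge_sums_vanish[OF null' h0] by blast
  then obtain u where "\<forall>r\<in>F. m dvd (p' r - u * shade_pattern r)"
    using shade_multiple_if_edge_sums_vanish by blast
  then have "\<forall>r\<in>F. m dvd (p r - (u * shade_pattern r + t * sign_pattern r))"
    unfolding p'_def by (simp add: algebra_simps)
  then show ?thesis by blast
qed

end

locale knot_game = shaded_knot_diagram H \<sigma> \<alpha> sh sg for H :: "'d set" and \<sigma> \<alpha> sh sg +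
  fixes k :: nat and a :: "'d set \<Rightarrow> 'd set \<Rightarrow> int"
  assumes version: "game_version H \<sigma> \<alpha> k a"
begin

abbreviation "K \<equiv> int k"

abbreviation M :: "('d set \<Rightarrow> int) \<Rightarrow> 'd set \<Rightarrow> int" where
  "M \<equiv> game_mult H \<sigma> \<alpha> a"

lemma game_mult_vertex:
  assumes x: "x \<in> H"
  shows "M p (vertex_of x) = (\<Sum>y\<in>vertex_of x. a (vertex_of x) (region_of y) * p (region_of y))"
proof -
  have "M p (vertex_of x) = (\<Sum>r\<in>{r \<in> F. incident (vertex_of x) r}. a (vertex_of x) r * p r)"
    unfolding game_mult_def using finite_regions by (simp add: sum.inter_filter)
  also have "\<dots> = (\<Sum>r\<in>region_of ` vertex_of x. a (vertex_of x) r * p r)"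
    using incident_regions_eq[OF x] by simp
  also have "\<dots> = (\<Sum>y\<in>vertex_of x. a (vertex_of x) (region_of y) * p (region_of y))"
    using sum.reindex[OF inj_on_region_of[OF x]] by simp
  finally show ?thesis .
qed

lemma increment_cong:
  assumes x: "x \<in> H" and y: "y \<in> vertex_of x"
  shows "K dvd (a (vertex_of x) (region_of y) - a (vertex_of x) (region_of x))"
proof -
  have yH: "y \<in> H" using vertex_of_subset[OF x] y by auto
  have vx: "vertex_of x \<in> VS" using verts_eq x by simp
  have irr: "irreducible_vertex H \<sigma> \<alpha> (vertex_of x)"
    using reduced_diagram vx unfolding reduced_def by blast
  have inc: "incident (vertex_of x) (region_of z)" if "z \<in> vertex_of x" for z
    using that self_in_region_of unfolding incident_def by blast
  have "a (vertex_of x) (region_of y) mod K = a (vertex_of x) (region_of x) mod K"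
    using version vx region_of_in_regions[OF yH] region_of_in_regions[OF x] inc[OF y] inc[of x] irr
      vertex_of_eq[OF x]
    unfolding game_version_def by blast
  then show ?thesis by (simp add: mod_eq_dvd_iff)
qed

lemma increment_coprime:
  assumes x: "x \<in> H"
  shows "coprime (a (vertex_of x) (region_of x)) K"
proof -
  have vx: "vertex_of x \<in> VS" using verts_eq x by simp
  have xv: "x \<in> vertex_of x" using vertex_of_eq[OF x] by simp
  have one: "card (vertex_of x \<inter> region_of x) = 1" using vertex_inter_region_of[OF x xv] by simp
  have inc: "incident (vertex_of x) (region_of x)"
    using xv self_in_region_of unfolding incident_def by blast
  have "if k = 0 then a (vertex_of x) (region_of x) = 1 else coprime (a (vertex_of x) (region_of x)) K"
    using version vx region_of_in_regions[OF x] inc one unfolding game_version_def by blast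
  then show ?thesis by (cases "k = 0") auto
qed

lemma dvd_game_mult_iff:
  assumes x: "x \<in> H"
  shows "K dvd M p (vertex_of x) \<longleftrightarrow> K dvd corner_sum p x"
proof -
  have "M p (vertex_of x) - a (vertex_of x) (region_of x) * corner_sum p x
      = (\<Sum>y\<in>vertex_of x. (a (vertex_of x) (region_of y) - a (vertex_of x) (region_of x)) * p (region_of y))"
    unfolding game_mult_vertex[OF x] corner_sum_def
    by (simp add: sum_distrib_left sum_subtractf[symmetric] algebra_simps)
  also have "K dvd \<dots>" using increment_cong[OF x] by (intro dvd_sum) auto
  finally have "K dvd M p (vertex_of x) \<longleftrightarrow> K dvd a (vertex_of x) (region_of x) * corner_sum p x"
    by (metis dvd_add_right_iff diff_add_cancel)
  also have "\<dots> \<longleftrightarrow> K dvd corner_sum p x"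
    using increment_coprime[OF x] by (simp add: coprime_dvd_mult_right_iff coprime_commute)
  finally show ?thesis .
qed

definition null_pattern :: "('d set \<Rightarrow> int) \<Rightarrow> bool" where
  "null_pattern p \<longleftrightarrow> (\<forall>v\<in>VS. K dvd M p v)"

lemma null_pattern_iff: "null_pattern p \<longleftrightarrow> (\<forall>x\<in>H. K dvd corner_sum p x)"
  unfolding null_pattern_def verts_eq using dvd_game_mult_iff by auto

lemma null_pattern_span:
  "null_pattern p \<Longrightarrow> \<exists>u t. \<forall>r\<in>F. K dvd (p r - (u * shade_pattern r + t * sign_pattern r))"
  unfolding null_pattern_iff by (rule corner_sum_kernel)

lemma game_mult_diff: "M (\<lambda>r. p r - q r) v = M p v - M q v"
  unfolding game_mult_def
  by (simp add: sum_subtractf[symmetric] right_diff_distrib if_distrib cong: if_cong)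

lemma game_mult_cong:
  assumes "\<forall>r\<in>F. K dvd (p r - q r)"
  shows "K dvd (M p v - M q v)"
proof -
  have "M p v - M q v = (\<Sum>r\<in>F. if incident v r then a v r * (p r - q r) else 0)"
    unfolding game_mult_def
    by (simp add: sum_subtractf[symmetric] right_diff_distrib if_distrib cong: if_cong)
  also have "K dvd \<dots>" using assms by (intro dvd_sum) auto
  finally show ?thesis .
qed

lemma null_pattern_cong:
  assumes "\<forall>r\<in>F. K dvd (p r - q r)" and "null_pattern q"
  shows "null_pattern p"
  unfolding null_pattern_def
proof
  fix v assume v: "v \<in> VS"
  have "K dvd (M p v - M q v) + M q v"
    using game_mult_cong[OF assms(1)] assms(2) v unfolding null_pattern_def by (blast intro: dvd_add)
  then show "K dvd M p v" by simp
qed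

definition solved_config :: "('d set \<Rightarrow> int) \<Rightarrow> 'd set \<Rightarrow> int" where
  "solved_config p = (\<lambda>v. if v \<in> VS then (- M p v) mod K else 0)"

lemma solved_config_eq_iff: "solved_config p = solved_config q \<longleftrightarrow> null_pattern (\<lambda>r. p r - q r)"
proof -
  have "solved_config p = solved_config q \<longleftrightarrow> (\<forall>v\<in>VS. (- M p v) mod K = (- M q v) mod K)"
    unfolding solved_config_def by (auto simp: fun_eq_iff)
  also have "\<dots> \<longleftrightarrow> (\<forall>v\<in>VS. K dvd (M p v - M q v))"
    by (simp add: mod_eq_dvd_iff) (metis dvd_minus_iff minus_diff_eq)
  also have "\<dots> \<longleftrightarrow> null_pattern (\<lambda>r. p r - q r)" unfolding null_pattern_def game_mult_diff ..
  finally show ?thesis .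
qed

definition avoiding :: "'d set set \<Rightarrow> ('d set \<Rightarrow> int) set" where
  "avoiding T = {p \<in> vecs k F. \<forall>r\<in>T. p r = 0}"

definition null_avoiding :: "'d set set \<Rightarrow> ('d set \<Rightarrow> int) set" where
  "null_avoiding T = {p \<in> avoiding T. null_pattern p}"

definition kernel_coeffs :: "'d set set \<Rightarrow> (int \<times> int) set" where
  "kernel_coeffs T = {(u, t). 0 \<le> u \<and> u < K \<and> 0 \<le> t \<and> t < K \<and>
     (\<forall>r\<in>T. K dvd (u * shade_pattern r + t * sign_pattern r))}"

definition kernel_pattern :: "int \<Rightarrow> int \<Rightarrow> 'd set \<Rightarrow> int" where
  "kernel_pattern u t = (\<lambda>r. if r \<in> F then (u * shade_pattern r + t * sign_pattern r) mod K else 0)"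

subsection \<open>Counting modulo \<open>k\<close>\<close>

context
  assumes k_pos: "0 < k"
begin

lemma solved_config_in_vecs: "solved_config p \<in> vecs k VS"
  unfolding vecs_def solved_config_def using k_pos by auto

lemma solving_iff_solved_config:
  assumes c: "c \<in> vecs k VS"
  shows "solving H \<sigma> \<alpha> k a c p \<longleftrightarrow> solved_config p = c"
proof -
  have "(M p v + c v) mod K = 0 \<longleftrightarrow> (- M p v) mod K = c v" if v: "v \<in> VS" for v
  proof -
    have "(- M p v) mod K = c v \<longleftrightarrow> (- M p v) mod K = c v mod K"
      using vecs_mod_eq[OF c k_pos, of v] by simp
    also have "\<dots> \<longleftrightarrow> K dvd (M p v + c v)"
      by (simp add: mod_eq_dvd_iff) (metis add.commute diff_minus_eq_add dvd_minus_iff minus_diff_eq)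
    finally show ?thesis by (simp add: dvd_eq_mod_eq_0)
  qed
  moreover have "c v = 0" if "v \<notin> VS" for v using c that unfolding vecs_def by auto
  ultimately show ?thesis unfolding solving_def solved_config_def by (auto simp: fun_eq_iff)
qed

lemma card_avoiding:
  assumes "T \<subseteq> F"
  shows "card (avoiding T) = k ^ (card F - card T)"
proof -
  have "finite T" using finite_regions assms by (rule finite_subset[rotated])
  then have "card (F - T) = card F - card T" using assms by (rule card_Diff_subset)
  moreover have "card (vecs k (F - T)) = k ^ card (F - T)"
    using card_vecs[OF finite_Diff[OF finite_regions] k_pos] .
  ultimately show ?thesis unfolding avoiding_def vecs_vanishing_on[OF assms] by simp
qed

lemma finite_avoiding: "T \<subseteq> F \<Longrightarrow> finite (avoiding T)"
  unfolding avoiding_def using finite_vecs[OF finite_Diff[OF finite_regions] k_pos]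
  by (simp add: vecs_vanishing_on)

lemma shifted_null_in_fibre:
  assumes p0: "p0 \<in> avoiding T" and z: "z \<in> null_avoiding T"
  defines "p \<equiv> (\<lambda>r. (z r + p0 r) mod K)"
  shows "p \<in> avoiding T" "solved_config p = solved_config p0"
proof -
  show "p \<in> avoiding T"
    using z p0 mod_in_vecs[OF k_pos] unfolding null_avoiding_def avoiding_def vecs_def p_def by auto
  have "null_pattern (\<lambda>r. p r - p0 r)"
  proof (rule null_pattern_cong, intro ballI)
    fix r
    have eq: "p r - p0 r - z r = (z r + p0 r) mod K - (z r + p0 r)" unfolding p_def by simp
    show "K dvd (p r - p0 r - z r)" unfolding eq by (rule dvd_mod_diff_self)
  qed (use z in \<open>simp add: null_avoiding_def\<close>)
  then show "solved_config p = solved_config p0" using solved_config_eq_iff by blast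
qed

lemma unshifted_fibre_in_null:
  assumes p0: "p0 \<in> avoiding T" and p: "p \<in> avoiding T" "solved_config p = solved_config p0"
  shows "(\<lambda>r. (p r - p0 r) mod K) \<in> null_avoiding T"
proof -
  have "null_pattern (\<lambda>r. (p r - p0 r) mod K)"
    using p(2) unfolding solved_config_eq_iff
    by (rule null_pattern_cong[rotated]) (simp add: dvd_mod_diff_self)
  moreover have "(\<lambda>r. (p r - p0 r) mod K) \<in> avoiding T"
    using p p0 mod_in_vecs[OF k_pos] unfolding avoiding_def vecs_def by auto
  ultimately show ?thesis unfolding null_avoiding_def by blast
qed

text \<open>Translation by \<open>p\<^sub>0\<close> modulo \<open>k\<close> identifies null patterns with the patterns solving
  the same configuration as \<open>p\<^sub>0\<close>.\<close>

lemma card_solved_config_fibre: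
  assumes p0: "p0 \<in> avoiding T"
  shows "card {p \<in> avoiding T. solved_config p = solved_config p0} = card (null_avoiding T)"
proof -
  let ?fibre = "{p \<in> avoiding T. solved_config p = solved_config p0}"
  define shift where "shift z = (\<lambda>r. (z r + p0 r) mod K)" for z
  define unshift where "unshift p = (\<lambda>r. (p r - p0 r) mod K)" for p
  have "bij_betw shift (null_avoiding T) ?fibre"
  proof (rule bij_betw_byWitness[where f' = unshift])
    show "\<forall>z\<in>null_avoiding T. unshift (shift z) = z"
    proof
      fix z assume "z \<in> null_avoiding T"
      then have "z \<in> vecs k F" unfolding null_avoiding_def avoiding_def by simp
      then show "unshift (shift z) = z"
        unfolding shift_def unshift_def
        by (simp add: fun_eq_iff mod_diff_left_eq vecs_mod_eq[OF _ k_pos])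
    qed
    show "\<forall>p\<in>?fibre. shift (unshift p) = p"
    proof
      fix p assume "p \<in> ?fibre"
      then have "p \<in> vecs k F" unfolding avoiding_def by simp
      then show "shift (unshift p) = p"
        unfolding shift_def unshift_def
        by (simp add: fun_eq_iff mod_add_left_eq vecs_mod_eq[OF _ k_pos])
    qed
    show "shift ` null_avoiding T \<subseteq> ?fibre"
      using shifted_null_in_fibre[OF p0] unfolding shift_def by blast
    show "unshift ` ?fibre \<subseteq> null_avoiding T"
      using unshifted_fibre_in_null[OF p0] unfolding unshift_def by blast
  qed
  then show ?thesis by (simp add: bij_betw_same_card)
qed

lemma num_solvable_avoiding_eq_card_image:
  assumes "T \<subseteq> F"
  shows "num_solvable_avoiding H \<sigma> \<alpha> k a T = card (solved_config ` avoiding T)"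
proof -
  have "{c \<in> vecs k VS. \<exists>p\<in>vecs k F. (\<forall>r\<in>T. p r = 0) \<and> solving H \<sigma> \<alpha> k a c p}
      = solved_config ` avoiding T"
  proof (intro subset_antisym subsetI)
    fix c assume "c \<in> {c \<in> vecs k VS. \<exists>p\<in>vecs k F. (\<forall>r\<in>T. p r = 0) \<and> solving H \<sigma> \<alpha> k a c p}"
    then obtain p where c: "c \<in> vecs k VS"
      and p: "p \<in> vecs k F" "\<forall>r\<in>T. p r = 0" "solving H \<sigma> \<alpha> k a c p" by auto
    then have "solved_config p = c" using solving_iff_solved_config by blast
    then show "c \<in> solved_config ` avoiding T" using p unfolding avoiding_def by auto
  next
    fix c assume "c \<in> solved_config ` avoiding T"
    then obtain p where p: "p \<in> avoiding T" "c = solved_config p" by auto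
    then have "solving H \<sigma> \<alpha> k a c p" using solving_iff_solved_config solved_config_in_vecs by blast
    then show "c \<in> {c \<in> vecs k VS. \<exists>p\<in>vecs k F. (\<forall>r\<in>T. p r = 0) \<and> solving H \<sigma> \<alpha> k a c p}"
      using p solved_config_in_vecs unfolding avoiding_def by auto
  qed
  then show ?thesis unfolding num_solvable_avoiding_def by simp
qed

lemma kernel_pattern_in_vecs: "kernel_pattern u t \<in> vecs k F"
  using k_pos unfolding kernel_pattern_def vecs_def by auto

lemma kernel_pattern_cong:
  "r \<in> F \<Longrightarrow> K dvd (kernel_pattern u t r - (u * shade_pattern r + t * sign_pattern r))"
  unfolding kernel_pattern_def by (simp add: dvd_mod_diff_self)

lemma kernel_pattern_in_null_avoiding:
  assumes T: "T \<subseteq> F" and ut: "(u, t) \<in> kernel_coeffs T"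
  shows "kernel_pattern u t \<in> null_avoiding T"
proof -
  have "\<forall>r\<in>T. kernel_pattern u t r = 0"
    using ut T unfolding kernel_pattern_def kernel_coeffs_def by (auto simp: dvd_eq_mod_eq_0)
  moreover have "null_pattern (kernel_pattern u t)"
  proof (rule null_pattern_cong)
    show "\<forall>r\<in>F. K dvd (kernel_pattern u t r - (u * shade_pattern r + t * sign_pattern r))"
      using kernel_pattern_cong by blast
    show "null_pattern (\<lambda>r. u * shade_pattern r + t * sign_pattern r)"
      unfolding null_pattern_iff using corner_sum_lin corner_sum_shade_pattern corner_sum_sign_pattern
      by simp
  qed
  ultimately show ?thesis using kernel_pattern_in_vecs unfolding null_avoiding_def avoiding_def by blast
qed

lemma null_avoiding_eq_kernel_pattern:
  assumes T: "T \<subseteq> F" and p: "p \<in> null_avoiding T"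
  shows "\<exists>u t. (u, t) \<in> kernel_coeffs T \<and> p = kernel_pattern u t"
proof -
  have pv: "p \<in> vecs k F" "\<forall>r\<in>T. p r = 0" "null_pattern p"
    using p unfolding null_avoiding_def avoiding_def by auto
  obtain u t where ut: "\<forall>r\<in>F. K dvd (p r - (u * shade_pattern r + t * sign_pattern r))"
    using null_pattern_span[OF pv(3)] by blast
  have cong: "K dvd (p r - kernel_pattern (u mod K) (t mod K) r)" if r: "r \<in> F" for r
  proof -
    let ?s = "shade_pattern r" and ?g = "sign_pattern r"
    have "K dvd (u mod K - u) * ?s + (t mod K - t) * ?g"
      using dvd_mod_diff_self by (intro dvd_add dvd_mult2) auto
    moreover have "K dvd p r - (u * ?s + t * ?g)" using ut r by blast
    moreover have "p r - kernel_pattern (u mod K) (t mod K) r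
        = (p r - (u * ?s + t * ?g)) - ((u mod K - u) * ?s + (t mod K - t) * ?g)
          - (kernel_pattern (u mod K) (t mod K) r - (u mod K * ?s + t mod K * ?g))"
      by (simp add: algebra_simps)
    ultimately show ?thesis using kernel_pattern_cong[OF r] by (metis dvd_diff)
  qed
  then have "p = kernel_pattern (u mod K) (t mod K)"
    using vecs_eq_if_cong[OF pv(1) kernel_pattern_in_vecs k_pos] by blast
  moreover have "(u mod K, t mod K) \<in> kernel_coeffs T"
  proof -
    have "K dvd (u mod K * shade_pattern r + t mod K * sign_pattern r)" if r: "r \<in> T" for r
      using kernel_pattern_cong[of r "u mod K" "t mod K"] cong[of r] r T pv(2) \<open>p = _\<close>
      by (metis diff_0 dvd_minus_iff subsetD)
    then show ?thesis unfolding kernel_coeffs_def using k_pos by auto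
  qed
  ultimately show ?thesis by blast
qed

lemma inj_on_kernel_pattern: "inj_on (\<lambda>(u, t). kernel_pattern u t) (kernel_coeffs T)"
proof (rule inj_onI, clarify)
  fix u t u' t' assume ut: "(u, t) \<in> kernel_coeffs T" "(u', t') \<in> kernel_coeffs T"
    and eq: "kernel_pattern u t = kernel_pattern u' t'"
  have range: "0 \<le> u" "u < K" "0 \<le> t" "t < K" "0 \<le> u'" "u' < K" "0 \<le> t'" "t' < K"
    using ut unfolding kernel_coeffs_def by auto
  obtain r0 r1 where r: "r0 \<in> F" "r0 \<in> sh" "r1 \<in> F" "r1 \<notin> sh" using ex_shaded_unshaded by blast
  have "u mod K = u' mod K"
    using fun_cong[OF eq, of r0] r unfolding kernel_pattern_def shade_pattern_def sign_pattern_def by simp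
  then have u: "u = u'" using range by simp
  have "(u * shade_pattern r1 + t * sign_pattern r1) mod K
      = (u * shade_pattern r1 + t' * sign_pattern r1) mod K"
    using fun_cong[OF eq, of r1] r u unfolding kernel_pattern_def by simp
  then have "K dvd (t - t') * sign_pattern r1" by (simp add: mod_eq_dvd_iff algebra_simps)
  then have "K dvd (t - t') * sign_pattern r1 * sign_pattern r1" by (rule dvd_mult2)
  then have "t mod K = t' mod K" using sign_pattern_sq[OF r(4)] by (simp add: mult.assoc mod_eq_dvd_iff)
  then have "t = t'" using range by simp
  then show "u = u' \<and> t = t'" using u by simp
qed

lemma card_null_avoiding:
  assumes "T \<subseteq> F"
  shows "card (null_avoiding T) = card (kernel_coeffs T)"
proof -
  have "null_avoiding T = (\<lambda>(u, t). kernel_pattern u t) ` kernel_coeffs T"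
  proof (intro subset_antisym subsetI)
    fix p assume "p \<in> null_avoiding T"
    then obtain u t where "(u, t) \<in> kernel_coeffs T" "p = kernel_pattern u t"
      using null_avoiding_eq_kernel_pattern[OF assms] by blast
    then show "p \<in> (\<lambda>(u, t). kernel_pattern u t) ` kernel_coeffs T" by force
  qed (use kernel_pattern_in_null_avoiding[OF assms] in auto)
  then show ?thesis using card_image[OF inj_on_kernel_pattern] by simp
qed

lemma num_solvable_avoiding_mult_card:
  assumes T: "T \<subseteq> F"
  shows "num_solvable_avoiding H \<sigma> \<alpha> k a T * card (kernel_coeffs T) = k ^ (card VS + 2 - card T)"
proof -
  have "card (avoiding T) = card (solved_config ` avoiding T) * card (null_avoiding T)"
  proof (rule card_eq_card_image_mult[OF finite_avoiding[OF T]])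
    fix c assume "c \<in> solved_config ` avoiding T"
    then obtain p0 where "p0 \<in> avoiding T" "c = solved_config p0" by blast
    then show "card {p \<in> avoiding T. solved_config p = c} = card (null_avoiding T)"
      using card_solved_config_fibre by simp
  qed
  then show ?thesis
    using card_avoiding[OF T] card_null_avoiding[OF T] num_solvable_avoiding_eq_card_image[OF T]
      card_regions by simp
qed

lemma card_kernel_coeffs_mixed:
  assumes shaded: "r \<in> T" "r \<in> sh" and unshaded: "r' \<in> T" "r' \<notin> sh"
  shows "card (kernel_coeffs T) = 1"
proof -
  have "kernel_coeffs T = {(0, 0)}"
  proof (intro subset_antisym subsetI)
    fix x assume x: "x \<in> kernel_coeffs T"
    then obtain u t where ut: "x = (u, t)" "0 \<le> u" "u < K" "0 \<le> t" "t < K"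
      "\<forall>r\<in>T. K dvd (u * shade_pattern r + t * sign_pattern r)"
      unfolding kernel_coeffs_def by auto
    have "K dvd u" using ut(6) shaded unfolding shade_pattern_def sign_pattern_def by auto
    then have u: "u = 0" using eq_0_if_dvd_in_range ut by blast
    then have "K dvd t * sign_pattern r' * sign_pattern r'" using ut(6) unshaded by auto
    then have "K dvd t" using sign_pattern_sq[OF unshaded(2)] by (simp add: mult.assoc)
    then show "x \<in> {(0, 0)}" using eq_0_if_dvd_in_range ut u by auto
  qed (use k_pos in \<open>auto simp: kernel_coeffs_def\<close>)
  then show ?thesis by simp
qed

lemma card_kernel_coeffs_shaded:
  assumes "T \<subseteq> sh" "T \<noteq> {}"
  shows "card (kernel_coeffs T) = k"
proof -
  have "kernel_coeffs T = {0} \<times> {0..<K}"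
  proof (intro subset_antisym subsetI)
    fix x assume x: "x \<in> kernel_coeffs T"
    then obtain u t where ut: "x = (u, t)" "0 \<le> u" "u < K" "0 \<le> t" "t < K"
      "\<forall>r\<in>T. K dvd (u * shade_pattern r + t * sign_pattern r)"
      unfolding kernel_coeffs_def by auto
    obtain r where r: "r \<in> T" using assms(2) by blast
    then have "K dvd u * shade_pattern r + t * sign_pattern r" using ut(6) by blast
    then have "K dvd u" using r assms(1) unfolding shade_pattern_def sign_pattern_def by auto
    then show "x \<in> {0} \<times> {0..<K}" using eq_0_if_dvd_in_range ut by auto
  qed (use assms in \<open>auto simp: kernel_coeffs_def shade_pattern_def sign_pattern_def\<close>)
  then show ?thesis by simp
qed

text \<open>If all regions of \<open>T\<close> are unshaded of sign \<open>e\<close>, the conditions all read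
  \<open>t e - u = 0\<close>, so \<open>t\<close> is determined by \<open>u\<close>.\<close>

lemma card_kernel_coeffs_same_sign:
  assumes "T \<inter> sh = {}" "T \<noteq> {}" and same: "\<forall>r\<in>T. \<forall>r'\<in>T. sg r = sg r'"
  shows "card (kernel_coeffs T) = k"
proof -
  obtain r1 where r1: "r1 \<in> T" using assms by blast
  define e where "e = sign_pattern r1"
  have e_sq: "e * e = 1" using r1 assms(1) sign_pattern_sq unfolding e_def by blast
  have cond: "u * shade_pattern r + t * sign_pattern r = t * e - u" if r: "r \<in> T" for r u t
  proof -
    have "r \<notin> sh" "r1 \<notin> sh" "sg r = sg r1" using r r1 assms(1) same by blast+
    then show ?thesis unfolding e_def shade_pattern_def sign_pattern_def by simp
  qed
  have "kernel_coeffs T = (\<lambda>u. (u, (e * u) mod K)) ` {0..<K}"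
  proof (intro subset_antisym subsetI)
    fix x assume x: "x \<in> kernel_coeffs T"
    then obtain u t where ut: "x = (u, t)" "0 \<le> u" "u < K" "0 \<le> t" "t < K"
      and all: "\<forall>r\<in>T. K dvd (u * shade_pattern r + t * sign_pattern r)"
      unfolding kernel_coeffs_def by auto
    have "K dvd (t - e * u)"
      using bspec[OF all r1] cond[OF r1] dvd_unit_mult_diff_iff[OF e_sq] by simp
    then have "t = (e * u) mod K" using ut by (simp add: mod_eq_dvd_iff[symmetric])
    then show "x \<in> (\<lambda>u. (u, (e * u) mod K)) ` {0..<K}" using ut by auto
  next
    fix x assume "x \<in> (\<lambda>u. (u, (e * u) mod K)) ` {0..<K}"
    then obtain u where u: "0 \<le> u" "u < K" "x = (u, (e * u) mod K)" by auto
    have "K dvd (e * u) mod K * e - u"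
      using dvd_unit_mult_diff_iff[OF e_sq, of K "(e * u) mod K" u] by (simp add: dvd_mod_diff_self)
    then have "\<forall>r\<in>T. K dvd (u * shade_pattern r + (e * u) mod K * sign_pattern r)" using cond by simp
    then show "x \<in> kernel_coeffs T" using u k_pos unfolding kernel_coeffs_def by simp
  qed
  moreover have "inj_on (\<lambda>u. (u, (e * u) mod K)) {0..<K}" by (rule inj_onI) simp
  ultimately show ?thesis by (simp add: card_image)
qed

text \<open>Two unshaded regions of opposite signs force \<open>t - u = 0\<close> and \<open>- t - u = 0\<close>.\<close>

lemma card_kernel_coeffs_opposite_signs:
  assumes "T \<inter> sh = {}" and signs: "\<exists>r\<in>T. \<exists>r'\<in>T. sg r \<noteq> sg r'"
  shows "card (kernel_coeffs T) = (if odd k then 1 else 2)"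
proof -
  obtain rp rm where r: "rp \<in> T" "sg rp" "rm \<in> T" "\<not> sg rm" using signs by blast
  have cond: "u * shade_pattern r + t * sign_pattern r = (if sg r then t - u else - t - u)"
    if "r \<in> T" for r u t
    using that assms(1) unfolding shade_pattern_def sign_pattern_def by auto
  define D where "D = {t. 0 \<le> t \<and> t < K \<and> K dvd 2 * t}"
  have "kernel_coeffs T = (\<lambda>t. (t, t)) ` D"
  proof (intro subset_antisym subsetI)
    fix x assume x: "x \<in> kernel_coeffs T"
    then obtain u t where ut: "x = (u, t)" "0 \<le> u" "u < K" "0 \<le> t" "t < K"
      and all: "\<forall>r\<in>T. K dvd (u * shade_pattern r + t * sign_pattern r)"
      unfolding kernel_coeffs_def by auto
    have "K dvd t - u" using bspec[OF all r(1)] cond[OF r(1)] r(2) by simp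
    then have "t = u" using ut by (simp add: mod_eq_dvd_iff[symmetric])
    have "K dvd - t - u" using bspec[OF all r(3)] cond[OF r(3)] r(4) by simp
    moreover have "- t - u = - (2 * t)" using \<open>t = u\<close> by simp
    ultimately have "K dvd 2 * t" by simp
    then show "x \<in> (\<lambda>t. (t, t)) ` D" using ut \<open>t = u\<close> unfolding D_def by auto
  next
    fix x assume "x \<in> (\<lambda>t. (t, t)) ` D"
    then obtain t where t: "0 \<le> t" "t < K" "K dvd 2 * t" "x = (t, t)" unfolding D_def by auto
    have "- t - t = - (2 * t)" by simp
    then have "K dvd - t - t" using t(3) by simp
    then show "x \<in> kernel_coeffs T" using t cond unfolding kernel_coeffs_def by auto
  qed
  moreover have "inj_on (\<lambda>t. (t, t)) D" by (rule inj_onI) simp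
  ultimately show ?thesis
    using card_residues_double_zero[OF k_pos] unfolding D_def by (simp add: card_image)
qed

lemma unique_solution_if_trivial_kernel:
  assumes T: "T \<subseteq> F" "card T = 2" and trivial: "card (kernel_coeffs T) = 1"
    and c: "c \<in> vecs k VS"
  shows "\<exists>!p. p \<in> vecs k F \<and> (\<forall>r\<in>T. p r = 0) \<and> solving H \<sigma> \<alpha> k a c p"
proof -
  have "card (solved_config ` avoiding T) = card (vecs k VS)"
    using num_solvable_avoiding_mult_card[OF T(1)] num_solvable_avoiding_eq_card_image[OF T(1)]
      T(2) trivial card_vecs[OF finite_verts k_pos] by simp
  then have "solved_config ` avoiding T = vecs k VS"
    using card_subset_eq[OF finite_vecs[OF finite_verts k_pos]] solved_config_in_vecs by blast
  then obtain p where p: "p \<in> avoiding T" "solved_config p = c" using c by (metis imageE)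
  have "card {q \<in> avoiding T. solved_config q = c} = 1"
    using card_solved_config_fibre[OF p(1)] card_null_avoiding[OF T(1)] trivial p(2) by simp
  then obtain p' where "{q \<in> avoiding T. solved_config q = c} = {p'}" using card_1_singletonE by blast
  then have fibre: "{q \<in> avoiding T. solved_config q = c} = {p}" using p by auto
  have "q \<in> vecs k F \<and> (\<forall>r\<in>T. q r = 0) \<and> solving H \<sigma> \<alpha> k a c q
      \<longleftrightarrow> q \<in> {q \<in> avoiding T. solved_config q = c}" for q
    using solving_iff_solved_config[OF c] unfolding avoiding_def by auto
  then show ?thesis unfolding fibre by auto
qed

end

lemma unique_solution_shaded_unshaded_mod:
  assumes k: "0 < k" and r: "r \<in> sh" and r': "r' \<in> F - sh" and c: "c \<in> vecs k VS"
  shows "\<exists>!p. p \<in> vecs k F \<and> p r = 0 \<and> p r' = 0 \<and> solving H \<sigma> \<alpha> k a c p"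
proof -
  have "r \<noteq> r'" using r r' by blast
  then have "{r, r'} \<subseteq> F" "card {r, r'} = 2" using r r' shaded_subset_regions by auto
  moreover have "card (kernel_coeffs {r, r'}) = 1"
    using card_kernel_coeffs_mixed[OF k, of r "{r, r'}" r'] r r' by simp
  ultimately have "\<exists>!p. p \<in> vecs k F \<and> (\<forall>x\<in>{r, r'}. p x = 0) \<and> solving H \<sigma> \<alpha> k a c p"
    by (intro unique_solution_if_trivial_kernel[OF k _ _ _ c])
  then show ?thesis by simp
qed

lemma unique_solution_opposite_signs:
  assumes k: "0 < k" "odd k" and r: "r \<in> F - sh" "r' \<in> F - sh" "sg r \<noteq> sg r'"
    and c: "c \<in> vecs k VS"
  shows "\<exists>!p. p \<in> vecs k F \<and> p r = 0 \<and> p r' = 0 \<and> solving H \<sigma> \<alpha> k a c p"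
proof -
  have "r \<noteq> r'" using r by blast
  then have "{r, r'} \<subseteq> F" "card {r, r'} = 2" using r by auto
  moreover have "card (kernel_coeffs {r, r'}) = 1"
    using card_kernel_coeffs_opposite_signs[OF k(1), of "{r, r'}"] r k(2) by auto
  ultimately have "\<exists>!p. p \<in> vecs k F \<and> (\<forall>x\<in>{r, r'}. p x = 0) \<and> solving H \<sigma> \<alpha> k a c p"
    by (intro unique_solution_if_trivial_kernel[OF k(1) _ _ _ c])
  then show ?thesis by simp
qed

lemma num_solvable_avoiding_mixed:
  assumes k: "0 < k" and S: "S \<subseteq> F" "S \<inter> sh \<noteq> {}" "S - sh \<noteq> {}"
  shows "num_solvable_avoiding H \<sigma> \<alpha> k a S = k ^ (card VS + 2 - card S)"
proof -
  obtain r r' where "r \<in> S" "r \<in> sh" "r' \<in> S" "r' \<notin> sh" using S by blast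
  then have "card (kernel_coeffs S) = 1" by (rule card_kernel_coeffs_mixed[OF k])
  then show ?thesis using num_solvable_avoiding_mult_card[OF k S(1)] by simp
qed

lemma num_solvable_avoiding_one_class:
  assumes k: "0 < k" and S: "S \<subseteq> F" "card S \<ge> 1"
    and one_class: "S \<subseteq> sh \<or> (S \<inter> sh = {} \<and> (\<forall>r\<in>S. \<forall>r'\<in>S. sg r = sg r'))"
  shows "num_solvable_avoiding H \<sigma> \<alpha> k a S = k ^ (card VS + 1 - card S)"
proof -
  have "S \<subset> F" using S(1) one_class ex_shaded_unshaded by blast
  then have "card S < card VS + 2" using psubset_card_mono[OF finite_regions] card_regions by simp
  then have exponent: "card VS + 2 - card S = Suc (card VS + 1 - card S)" by simp
  have "S \<noteq> {}" using S(2) by auto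
  then have "card (kernel_coeffs S) = k"
    using one_class card_kernel_coeffs_shaded[OF k] card_kernel_coeffs_same_sign[OF k] by blast
  then have "num_solvable_avoiding H \<sigma> \<alpha> k a S * k = k * k ^ (card VS + 1 - card S)"
    using num_solvable_avoiding_mult_card[OF k S(1)] exponent by simp
  then show ?thesis using k by simp
qed

lemma num_solvable_avoiding_opposite_signs:
  assumes k: "0 < k" and S: "S \<subseteq> F" "S \<inter> sh = {}" "\<exists>r\<in>S. \<exists>r'\<in>S. sg r \<noteq> sg r'"
  shows "(odd k \<longrightarrow> num_solvable_avoiding H \<sigma> \<alpha> k a S = k ^ (card VS + 2 - card S))
    \<and> (even k \<longrightarrow> 2 * num_solvable_avoiding H \<sigma> \<alpha> k a S = k ^ (card VS + 2 - card S))"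
  using num_solvable_avoiding_mult_card[OF k S(1)] card_kernel_coeffs_opposite_signs[OF k S(2,3)]
  by (cases "odd k") (auto simp: mult.commute)

subsection \<open>Solutions over the integers\<close>

lemma increment_eq_1:
  assumes k0: "k = 0" and v: "v \<in> VS" and r: "r \<in> F" and inc: "incident v r"
  shows "a v r = 1"
proof -
  obtain x where x: "x \<in> H" "v = vertex_of x" using v verts_eq by auto
  have "r \<in> region_of ` vertex_of x" using incident_regions_eq[OF x(1)] r inc x by auto
  then obtain y where y: "y \<in> vertex_of x" "r = region_of y" by auto
  have "card (v \<inter> r) = 1" using vertex_inter_region_of[OF x(1) y(1)] x y by simp
  then show ?thesis using version v r inc k0 unfolding game_version_def by auto
qed

lemma game_version_any_modulus: "k = 0 \<Longrightarrow> game_version H \<sigma> \<alpha> m a"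
  unfolding game_version_def using increment_eq_1 by auto

lemma unique_solution_over_int:
  assumes k0: "k = 0" and r: "r \<in> sh" and r': "r' \<in> F - sh"
    and p: "p \<in> vecs k F" "p r = 0" "p r' = 0" "solving H \<sigma> \<alpha> k a c p"
    and q: "q \<in> vecs k F" "q r = 0" "q r' = 0" "solving H \<sigma> \<alpha> k a c q"
  shows "p = q"
proof -
  have "M p v = M q v" if "v \<in> VS" for v using p(4) q(4) that k0 unfolding solving_def by fastforce
  then have "null_pattern (\<lambda>r. p r - q r)" unfolding null_pattern_def game_mult_diff by simp
  then obtain u t where "\<forall>r\<in>F. K dvd (p r - q r - (u * shade_pattern r + t * sign_pattern r))"
    using null_pattern_span by blast
  then have ut: "\<forall>r\<in>F. p r - q r = u * shade_pattern r + t * sign_pattern r" using k0 by simp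
  have "r \<in> F" using r shaded_subset_regions by blast
  then have "p r - q r = u * shade_pattern r + t * sign_pattern r" using ut by blast
  then have u: "u = 0" using r p(2) q(2) unfolding shade_pattern_def sign_pattern_def by simp
  have "t * sign_pattern r' = 0" using bspec[OF ut, of r'] r' p(3) q(3) u by simp
  moreover have "sign_pattern r' \<noteq> 0" using r' unfolding sign_pattern_def by auto
  ultimately have t: "t = 0" by simp
  have "p x = q x" for x
    using ut u t p(1) q(1) unfolding vecs_def by (cases "x \<in> F") auto
  then show ?thesis by (rule ext)
qed

lemma game_mult_eq_sum_subset:
  assumes J: "J \<subseteq> F" and p: "\<And>r. r \<in> F - J \<Longrightarrow> p r = 0"
  shows "M p v = (\<Sum>r\<in>J. (if incident v r then a v r else 0) * p r)"
proof -
  have "M p v = (\<Sum>r\<in>J. if incident v r then a v r * p r else 0)"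
    unfolding game_mult_def using J p finite_regions by (intro sum.mono_neutral_right) auto
  also have "\<dots> = (\<Sum>r\<in>J. (if incident v r then a v r else 0) * p r)" by (intro sum.cong) auto
  finally show ?thesis .
qed

text \<open>After deleting the columns of \<open>r\<close> and \<open>r'\<close>, the game matrix is square, and by the
  finite case its system is solvable modulo every \<open>m\<close> (all increments are \<open>1\<close> for \<open>k = \<infinity>\<close>,
  so they form a version for every modulus).\<close>

lemma solution_exists_over_int:
  assumes k0: "k = 0" and r: "r \<in> sh" and r': "r' \<in> F - sh" and c: "c \<in> vecs k VS"
  shows "\<exists>p. p \<in> vecs k F \<and> p r = 0 \<and> p r' = 0 \<and> solving H \<sigma> \<alpha> k a c p"
proof -
  define J where "J = F - {r, r'}"
  have "r \<in> F" "r \<noteq> r'" using r r' shaded_subset_regions by auto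
  then have J: "J \<subseteq> F" "finite J" "card VS = card J"
    unfolding J_def using card_regions r' finite_regions by (auto simp: card_Diff_subset)
  define f where "f v r0 = (if incident v r0 then a v r0 else 0)" for v r0
  have M_eq: "M p v = (\<Sum>r0\<in>J. f v r0 * p r0)" if "p r = 0" "p r' = 0" for p v
    unfolding f_def using game_mult_eq_sum_subset[OF J(1)] that unfolding J_def by blast
  have mod_solvable: "\<exists>x. \<forall>v\<in>VS. m dvd ((\<Sum>r0\<in>J. f v r0 * x r0) - c' v)"
    if m: "m \<ge> 2" for m c'
  proof -
    interpret Mod: knot_game H \<sigma> \<alpha> sh sg "nat m" a
      using game_version_any_modulus[OF k0] by unfold_locales
    define cc where "cc v = (if v \<in> VS then (- c' v) mod m else 0)" for v
    have "cc \<in> vecs (nat m) VS" unfolding cc_def vecs_def using m by auto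
    then have "\<exists>!p. p \<in> vecs (nat m) F \<and> p r = 0 \<and> p r' = 0 \<and> solving H \<sigma> \<alpha> (nat m) a cc p"
      using Mod.unique_solution_shaded_unshaded_mod[OF _ r r'] m by simp
    then obtain p where p: "p r = 0" "p r' = 0" "solving H \<sigma> \<alpha> (nat m) a cc p" by (elim ex1E) blast
    have "m dvd ((\<Sum>r0\<in>J. f v r0 * p r0) - c' v)" if v: "v \<in> VS" for v
    proof -
      have "m dvd (M p v + (- c' v) mod m)" using p(3) v m unfolding solving_def cc_def
        by (simp add: dvd_eq_mod_eq_0)
      then have "m dvd (M p v + (- c' v) mod m) - ((- c' v) mod m - (- c' v))"
        using dvd_mod_diff_self by (rule dvd_diff)
      then show ?thesis using M_eq[OF p(1,2)] by simp
    qed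
    then show ?thesis by blast
  qed
  have "\<exists>x. \<forall>v\<in>VS. (\<Sum>r0\<in>J. f v r0 * x r0) = - c v"
    by (rule int_linear_system_solvable_finite[OF finite_verts J(2,3) mod_solvable])
  then obtain x where x: "\<forall>v\<in>VS. (\<Sum>r0\<in>J. f v r0 * x r0) = - c v" by blast
  define p where "p r0 = (if r0 \<in> J then x r0 else 0)" for r0
  have p0: "p r = 0" "p r' = 0" unfolding p_def J_def by auto
  have "M p v = - c v" if "v \<in> VS" for v
    using M_eq[OF p0] x that unfolding p_def by (simp cong: sum.cong)
  then have "solving H \<sigma> \<alpha> k a c p" using k0 unfolding solving_def by simp
  moreover have "p \<in> vecs k F" using J(1) k0 unfolding vecs_def p_def by auto
  ultimately show ?thesis using p0 by blast
qed

lemma unique_solution_shaded_unshaded: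
  assumes r: "r \<in> sh" and r': "r' \<in> F - sh" and c: "c \<in> vecs k VS"
  shows "\<exists>!p. p \<in> vecs k F \<and> p r = 0 \<and> p r' = 0 \<and> solving H \<sigma> \<alpha> k a c p"
proof (cases "k = 0")
  case True
  then show ?thesis
    using solution_exists_over_int[OF True r r' c] unique_solution_over_int[OF True r r'] by blast
next
  case False
  then show ?thesis using unique_solution_shaded_unshaded_mod[OF _ r r' c] by simp
qed

end

theorem mainTheorem16:
  fixes H :: "'d set" and \<sigma> \<alpha> :: "'d \<Rightarrow> 'd" and k :: nat
    and a :: "'d set \<Rightarrow> 'd set \<Rightarrow> int" and sh :: "'d set set" and sg :: "'d set \<Rightarrow> bool"
  assumes D: "knot_diagram H \<sigma> \<alpha>" and red: "reduced H \<sigma> \<alpha>"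
    and k: "k = 0 \<or> 2 \<le> k"
    and ver: "game_version H \<sigma> \<alpha> k a"
    and cb: "checkerboard H \<sigma> \<alpha> sh"
    and sgn: "alternating_signing H \<sigma> \<alpha> sh sg"
  shows
   "(\<forall>r\<in>sh. \<forall>r'\<in>regions H \<sigma> \<alpha> - sh. \<forall>c\<in>vecs k (verts H \<sigma>).
       \<exists>!p. p \<in> vecs k (regions H \<sigma> \<alpha>) \<and> p r = 0 \<and> p r' = 0 \<and> solving H \<sigma> \<alpha> k a c p)
    \<and> ((k \<noteq> 0 \<and> odd k) \<longrightarrow>
       (\<forall>r\<in>regions H \<sigma> \<alpha> - sh. \<forall>r'\<in>regions H \<sigma> \<alpha> - sh. sg r \<noteq> sg r' \<longrightarrow>
         (\<forall>c\<in>vecs k (verts H \<sigma>).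
           \<exists>!p. p \<in> vecs k (regions H \<sigma> \<alpha>) \<and> p r = 0 \<and> p r' = 0 \<and> solving H \<sigma> \<alpha> k a c p)))
    \<and> (k \<noteq> 0 \<longrightarrow> (\<forall>S. S \<subseteq> regions H \<sigma> \<alpha> \<longrightarrow>
         (let n = card (verts H \<sigma>); i = card S; q = num_solvable_avoiding H \<sigma> \<alpha> k a S in
           (S \<inter> sh \<noteq> {} \<and> S - sh \<noteq> {} \<longrightarrow> q = k ^ (n + 2 - i))
         \<and> (i \<ge> 1 \<and> (S \<subseteq> sh \<or> (S \<inter> sh = {} \<and> (\<forall>r\<in>S. \<forall>r'\<in>S. sg r = sg r'))) \<longrightarrow>
              q = k ^ (n + 1 - i))
         \<and> (S \<inter> sh = {} \<and> (\<exists>r\<in>S. \<exists>r'\<in>S. sg r \<noteq> sg r') \<longrightarrow>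
              (odd k \<longrightarrow> q = k ^ (n + 2 - i)) \<and> (even k \<longrightarrow> 2 * q = k ^ (n + 2 - i))))))"
proof -
  interpret knot_game H \<sigma> \<alpha> sh sg k a using D red cb sgn ver by unfold_locales
  show ?thesis
    unfolding Let_def
    using unique_solution_shaded_unshaded unique_solution_opposite_signs
      num_solvable_avoiding_mixed num_solvable_avoiding_one_class num_solvable_avoiding_opposite_signs
    by simp
qed

end
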